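(* Let $k \geq 1$ be an integer. Every outerplanar graph of girth at least $2k$ admits a homomorphism to the cycle $C_{2k+1}$.
   Context: A graph homomorphism from $G$ to $H$ is a map $f : V(G) \to V(H)$ such that $f(u)f(v) \in E(H)$ whenever $uv \in E(G)$. The girth of a graph is the length of a shortest cycle (infinite if acyclic). $C_m$ is the cycle on $m$ vertices. *)

theory Defs
  imports "HOL-Analysis.Analysis"
begin

definition simple_graph :: "'a set \<Rightarrow> ('a \<Rightarrow> 'a \<Rightarrow> bool) \<Rightarrow> bool" where
  "simple_graph V E \<longleftrightarrow> finite V \<and> (\<forall>u v. E u v \<longrightarrow> u \<in> V \<and> v \<in> V)
     \<and> (\<forall>u v. E u v \<longrightarrow> E v u) \<and> (\<forall>v. \<not> E v v)"

definition plane_drawing ::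
  "'a set \<Rightarrow> ('a \<Rightarrow> 'a \<Rightarrow> bool) \<Rightarrow> ('a \<Rightarrow> complex) \<Rightarrow> ('a \<Rightarrow> 'a \<Rightarrow> real \<Rightarrow> complex) \<Rightarrow> bool" where
  "plane_drawing V E p g \<longleftrightarrow>
     inj_on p V
     \<and> (\<forall>u v. E u v \<longrightarrow> arc (g u v) \<and> pathstart (g u v) = p u \<and> pathfinish (g u v) = p v
                      \<and> g v u = reversepath (g u v))
     \<and> (\<forall>u v w. E u v \<and> w \<in> V \<and> w \<noteq> u \<and> w \<noteq> v \<longrightarrow> p w \<notin> path_image (g u v))
     \<and> (\<forall>u v x y. E u v \<and> E x y \<and> {u, v} \<noteq> {x, y} \<longrightarrow>
           path_image (g u v) \<inter> path_image (g x y) \<subseteq> p ` ({u, v} \<inter> {x, y}))"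

definition drawing_set ::
  "'a set \<Rightarrow> ('a \<Rightarrow> 'a \<Rightarrow> bool) \<Rightarrow> ('a \<Rightarrow> complex) \<Rightarrow> ('a \<Rightarrow> 'a \<Rightarrow> real \<Rightarrow> complex) \<Rightarrow> complex set" where
  "drawing_set V E p g = p ` V \<union> \<Union> {path_image (g u v) | u v. E u v}"

text \<open>Outerplanar: a finite simple graph having a plane drawing in which every vertex lies on
  the boundary of the outer (unbounded) face, i.e. in the closure of the outside of the drawing.\<close>
definition outerplanar :: "'a set \<Rightarrow> ('a \<Rightarrow> 'a \<Rightarrow> bool) \<Rightarrow> bool" where
  "outerplanar V E \<longleftrightarrow> simple_graph V E \<and>
     (\<exists>p g. plane_drawing V E p g \<and>
            (\<forall>v\<in>V. p v \<in> closure (outside (drawing_set V E p g))))"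

definition is_cycle :: "'a set \<Rightarrow> ('a \<Rightarrow> 'a \<Rightarrow> bool) \<Rightarrow> 'a list \<Rightarrow> bool" where
  "is_cycle V E cs \<longleftrightarrow> length cs \<ge> 3 \<and> distinct cs \<and> set cs \<subseteq> V
     \<and> (\<forall>i < length cs. E (cs ! i) (cs ! ((i + 1) mod length cs)))"

definition girth_at_least :: "'a set \<Rightarrow> ('a \<Rightarrow> 'a \<Rightarrow> bool) \<Rightarrow> nat \<Rightarrow> bool" where
  "girth_at_least V E g \<longleftrightarrow> (\<forall>cs. is_cycle V E cs \<longrightarrow> length cs \<ge> g)"

definition cycle_graph_adj :: "nat \<Rightarrow> nat \<Rightarrow> nat \<Rightarrow> bool" where
  "cycle_graph_adj m i j \<longleftrightarrow> i < m \<and> j < m \<and> (j = (i + 1) mod m \<or> i = (j + 1) mod m)"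

definition graph_hom :: "'a set \<Rightarrow> ('a \<Rightarrow> 'a \<Rightarrow> bool) \<Rightarrow> 'b set \<Rightarrow> ('b \<Rightarrow> 'b \<Rightarrow> bool) \<Rightarrow> ('a \<Rightarrow> 'b) \<Rightarrow> bool" where
  "graph_hom V E W F f \<longleftrightarrow> (\<forall>v\<in>V. f v \<in> W) \<and> (\<forall>u v. E u v \<longrightarrow> F (f u) (f v))"

end

theory Submission
  imports Defs
begin

text \<open>
  Induction on the number of vertices. A vertex of degree at most one is removed, and coloured
  next to its neighbour afterwards. Otherwise the graph contains a cycle; take a longest one, \<open>C\<close>.

  The topological input is that an outerplane drawing contains no theta graph all three of whose
  paths have an interior vertex: by the Jordan curve theorem one of the three arcs runs inside the
  closed curve formed by the other two, so its interior vertices miss the outer face. In the same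
  way, every chord of a cycle runs inside it, and two chords of a cycle cannot cross.

  If some vertex lies off \<open>C\<close>, its component in \<open>G - C\<close> is attached to at most one vertex
  \<open>v\<close> of \<open>C\<close>: a path outside \<open>C\<close> between two vertices of \<open>C\<close> would give a longer cycle or
  a theta graph. Both sides of the cut vertex \<open>v\<close> are coloured by induction, and the colourings
  are glued after a rotation of \<open>C\<^sub>2\<^sub>k\<^sub>+\<^sub>1\<close>.

  If \<open>C\<close> is Hamiltonian, a shortest chord of \<open>C\<close> (or \<open>C\<close> itself, if there is none) closes a
  cycle \<open>P\<close> whose interior vertices have degree two. By the girth assumption \<open>P\<close> has at least
  \<open>2k\<close> vertices, so the path along \<open>P\<close> between its adjacent ends has odd length or length at
  least \<open>2k\<close>; adjacent vertices of \<open>C\<^sub>2\<^sub>k\<^sub>+\<^sub>1\<close> are joined by walks of all these lengths,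
  so a colouring of \<open>G\<close> without the interior of \<open>P\<close> extends.
\<close>

section \<open>Theta graphs in the plane\<close>

lemma connected_subset_open_Un_disjoint:
  fixes S :: "'b::topological_space set"
  assumes "connected S" "open A" "open B" "A \<inter> B = {}" "S \<subseteq> A \<union> B"
  shows "S \<subseteq> A \<or> S \<subseteq> B"
  using connectedD[OF assms(1,2,3)] assms(4,5) by blast

lemma connected_arc_image_Diff_pathstart:
  fixes c :: "real \<Rightarrow> 'b::real_normed_vector"
  assumes "arc c"
  shows "connected (path_image c - {pathstart c})"
proof -
  have "c ` {0<..1} = path_image c - {pathstart c}"
  proof
    show "c ` {0<..1} \<subseteq> path_image c - {pathstart c}"
      using arc_imp_inj_on[OF assms] unfolding path_image_def pathstart_def inj_on_def by force
    show "path_image c - {pathstart c} \<subseteq> c ` {0<..1}"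
      unfolding path_image_def pathstart_def by (force simp: image_iff)
  qed
  moreover have "continuous_on {0<..1} c"
    using arc_imp_path[OF assms] unfolding path_def by (rule continuous_on_subset) auto
  then have "connected (c ` {0<..1})"
    by (rule connected_continuous_image) (simp add: is_interval_connected)
  ultimately show ?thesis by simp
qed

lemma Jordan_two_arcs:
  fixes c d :: "real \<Rightarrow> complex"
  assumes "arc c" "arc d" "pathstart c = a" "pathfinish c = b" "pathstart d = a" "pathfinish d = b"
    and "path_image c \<inter> path_image d = {a, b}"
  defines "T \<equiv> path_image c \<union> path_image d"
  shows "inside T \<noteq> {}" "open (inside T)" "connected (inside T)" "bounded (inside T)"
    "open (outside T)" "connected (outside T)" "frontier (inside T) = T"
    "closure (inside T) = inside T \<union> T" "- closure (inside T) = outside T"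
proof -
  have "simple_path (c +++ reversepath d)"
    using assms by (subst simple_path_join_loop_eq) (auto simp: arc_reversepath)
  moreover have "path_image (c +++ reversepath d) = T"
    using assms by (simp add: path_image_join)
  moreover have "pathfinish (c +++ reversepath d) = pathstart (c +++ reversepath d)"
    using assms by simp
  ultimately have J: "inside T \<noteq> {}" "open (inside T)" "connected (inside T)"
    "outside T \<noteq> {}" "open (outside T)" "connected (outside T)" "bounded (inside T)"
    "\<not> bounded (outside T)" "inside T \<inter> outside T = {}" "inside T \<union> outside T = - T"
    "frontier (inside T) = T" "frontier (outside T) = T"
    using Jordan_inside_outside by metis+
  then show "inside T \<noteq> {}" "open (inside T)" "connected (inside T)" "bounded (inside T)"
    "open (outside T)" "connected (outside T)" "frontier (inside T) = T"
    by blast+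
  show cl: "closure (inside T) = inside T \<union> T"
    using J closure_Un_frontier[of "inside T"] by simp
  show "- closure (inside T) = outside T"
    unfolding cl using J by blast
qed

definition theta_arcs ::
  "complex \<Rightarrow> complex \<Rightarrow> (real \<Rightarrow> complex) \<Rightarrow> (real \<Rightarrow> complex) \<Rightarrow> (real \<Rightarrow> complex) \<Rightarrow> bool" where
  "theta_arcs a b c1 c2 c3 \<longleftrightarrow> a \<noteq> b \<and>
     (\<forall>c\<in>{c1, c2, c3}. arc c \<and> pathstart c = a \<and> pathfinish c = b) \<and>
     path_image c1 \<inter> path_image c2 = {a, b} \<and> path_image c1 \<inter> path_image c3 = {a, b} \<and>
     path_image c2 \<inter> path_image c3 = {a, b}"

lemma theta_arcs_swap12: "theta_arcs a b c1 c2 c3 \<Longrightarrow> theta_arcs a b c2 c1 c3"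
  and theta_arcs_swap23: "theta_arcs a b c1 c2 c3 \<Longrightarrow> theta_arcs a b c1 c3 c2"
  by (auto simp: theta_arcs_def)

lemma theta_arcs_path_image:
  assumes "theta_arcs a b c1 c2 c3"
  shows "{a, b} \<subseteq> path_image c1" "path_image c1 - {a, b} \<noteq> {}" "connected (path_image c1 - {a, b})"
  using assms nonempty_simple_path_endless[OF arc_imp_simple_path, of c1]
    connected_simple_path_endless[OF arc_imp_simple_path, of c1]
  unfolding theta_arcs_def by auto

lemma Jordan_theta_arcs:
  assumes "theta_arcs a b c1 c2 c3"
  defines "T \<equiv> path_image c1 \<union> path_image c2"
  shows "inside T \<noteq> {}" "open (inside T)" "connected (inside T)" "bounded (inside T)"
    "open (outside T)" "connected (outside T)" "frontier (inside T) = T"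
    "closure (inside T) = inside T \<union> T" "- closure (inside T) = outside T"
  using assms Jordan_two_arcs[of c1 c2 a b] unfolding theta_arcs_def by auto

lemma theta_arc_interior_inside_or_outside:
  assumes "theta_arcs a b c1 c2 c3"
  shows "path_image c3 - {a, b} \<subseteq> inside (path_image c1 \<union> path_image c2)
       \<or> path_image c3 - {a, b} \<subseteq> outside (path_image c1 \<union> path_image c2)"
proof (rule connected_subset_open_Un_disjoint)
  show "connected (path_image c3 - {a, b})"
    using theta_arcs_path_image(3)[OF theta_arcs_swap12[OF theta_arcs_swap23[OF assms]]] .
  show "open (inside (path_image c1 \<union> path_image c2))"
    "open (outside (path_image c1 \<union> path_image c2))"
    using Jordan_theta_arcs[OF assms] by blast+
  show "path_image c3 - {a, b}
      \<subseteq> inside (path_image c1 \<union> path_image c2) \<union> outside (path_image c1 \<union> path_image c2)"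
    using assms unfolding theta_arcs_def by (auto simp: inside_Un_outside)
qed (simp add: inside_Int_outside)

lemma theta_inside_inside_or_outside:
  assumes th: "theta_arcs a b c1 c2 c3"
    and out: "path_image c3 - {a, b} \<subseteq> outside (path_image c1 \<union> path_image c2)"
  shows "inside (path_image c1 \<union> path_image c2) \<subseteq> inside (path_image c1 \<union> path_image c3)
       \<or> inside (path_image c1 \<union> path_image c2) \<subseteq> outside (path_image c1 \<union> path_image c3)"
proof (rule connected_subset_open_Un_disjoint)
  let ?T1 = "path_image c1" and ?T2 = "path_image c2" and ?T3 = "path_image c3"
  show "connected (inside (?T1 \<union> ?T2))" using Jordan_theta_arcs[OF th] by blast
  show "open (inside (?T1 \<union> ?T3))" "open (outside (?T1 \<union> ?T3))"
    using Jordan_theta_arcs[OF theta_arcs_swap23[OF th]] by blast+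
  have "inside (?T1 \<union> ?T2) \<inter> ?T3 = {}"
    using out theta_arcs_path_image(1)[OF th] inside_Int_outside inside_no_overlap by fast
  then show "inside (?T1 \<union> ?T2) \<subseteq> inside (?T1 \<union> ?T3) \<union> outside (?T1 \<union> ?T3)"
    using inside_no_overlap[of "?T1 \<union> ?T2"] inside_Un_outside[of "?T1 \<union> ?T3"] by blast
qed (simp add: inside_Int_outside)

lemma theta_inside_subset_outside:
  assumes th: "theta_arcs a b c1 c2 c3"
    and out2: "path_image c2 - {a, b} \<subseteq> outside (path_image c1 \<union> path_image c3)"
    and out3: "path_image c3 - {a, b} \<subseteq> outside (path_image c1 \<union> path_image c2)"
  shows "inside (path_image c1 \<union> path_image c2) \<subseteq> outside (path_image c1 \<union> path_image c3)"
proof (rule ccontr)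
  let ?T1 = "path_image c1" and ?T2 = "path_image c2" and ?T3 = "path_image c3"
  note J12 = Jordan_theta_arcs[OF th] and J13 = Jordan_theta_arcs[OF theta_arcs_swap23[OF th]]
  assume "\<not> ?thesis"
  then have sub: "inside (?T1 \<union> ?T2) \<subseteq> inside (?T1 \<union> ?T3)"
    using theta_inside_inside_or_outside[OF th out3] by blast
  consider "inside (?T1 \<union> ?T3) \<subseteq> inside (?T1 \<union> ?T2)" | "inside (?T1 \<union> ?T3) \<subseteq> outside (?T1 \<union> ?T2)"
    using theta_inside_inside_or_outside[OF theta_arcs_swap23[OF th] out2] by blast
  then show False
  proof cases
    case 1
    then have "?T1 \<union> ?T3 = ?T1 \<union> ?T2" using sub J12(7) J13(7) by (metis subset_antisym)
    moreover obtain x where "x \<in> ?T2 - {a, b}"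
      using theta_arcs_path_image(2)[OF theta_arcs_swap12[OF th]] by blast
    ultimately show False using th unfolding theta_arcs_def by blast
  next
    case 2
    then show False using sub J12(1) inside_Int_outside by blast
  qed
qed

lemma theta_outside_Int_connected:
  assumes th: "theta_arcs a b c1 c2 c3"
    and in12: "inside (path_image c1 \<union> path_image c2) \<subseteq> outside (path_image c1 \<union> path_image c3)"
    and in13: "inside (path_image c1 \<union> path_image c3) \<subseteq> outside (path_image c1 \<union> path_image c2)"
  shows "connected
    (outside (path_image c1 \<union> path_image c2) \<inter> outside (path_image c1 \<union> path_image c3))"
proof -
  let ?T1 = "path_image c1" and ?T2 = "path_image c2" and ?T3 = "path_image c3"
  note J12 = Jordan_theta_arcs[OF th] and J13 = Jordan_theta_arcs[OF theta_arcs_swap23[OF th]]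
  have "?T2 \<inter> ?T3 \<subseteq> ?T1"
    using th theta_arcs_path_image(1)[OF th] unfolding theta_arcs_def by blast
  then have meet: "closure (inside (?T1 \<union> ?T2)) \<inter> closure (inside (?T1 \<union> ?T3)) = ?T1"
    unfolding J12(8) J13(8)
    using in12 in13 inside_Int_outside[of "?T1 \<union> ?T3"] inside_Int_outside[of "?T1 \<union> ?T2"]
      outside_no_overlap[of "?T1 \<union> ?T3"] outside_no_overlap[of "?T1 \<union> ?T2"] by blast
  have "connected (- (closure (inside (?T1 \<union> ?T2)) \<union> closure (inside (?T1 \<union> ?T3))))"
  proof (rule Janiszewski_connected)
    show "compact (closure (inside (?T1 \<union> ?T2)))" using J12(4) compact_closure by blast
    show "connected (closure (inside (?T1 \<union> ?T2)) \<inter> closure (inside (?T1 \<union> ?T3)))"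
      unfolding meet using th unfolding theta_arcs_def by (simp add: connected_arc_image)
    show "connected (- closure (inside (?T1 \<union> ?T2)))" unfolding J12(9) using J12(6) .
    show "connected (- closure (inside (?T1 \<union> ?T3)))" unfolding J13(9) using J13(6) .
  qed simp
  then show ?thesis using J12(9) J13(9) by (simp add: Compl_Un)
qed

lemma theta_insides_not_all_outside:
  assumes th: "theta_arcs a b c1 c2 c3"
    and in12: "inside (path_image c1 \<union> path_image c2) \<subseteq> outside (path_image c1 \<union> path_image c3)"
    and in13: "inside (path_image c1 \<union> path_image c3) \<subseteq> outside (path_image c1 \<union> path_image c2)"
    and in23: "inside (path_image c2 \<union> path_image c3)
      \<subseteq> outside (path_image c1 \<union> path_image c2) \<inter> outside (path_image c1 \<union> path_image c3)"
  shows False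
proof -
  let ?T1 = "path_image c1" and ?T2 = "path_image c2" and ?T3 = "path_image c3"
  let ?O = "outside (?T1 \<union> ?T2) \<inter> outside (?T1 \<union> ?T3)"
  note J23 = Jordan_theta_arcs[OF theta_arcs_swap23[OF theta_arcs_swap12[OF th]]]
  have "?O \<subseteq> inside (?T2 \<union> ?T3) \<or> ?O \<subseteq> outside (?T2 \<union> ?T3)"
  proof (rule connected_subset_open_Un_disjoint)
    show "connected ?O" using theta_outside_Int_connected[OF th in12 in13] .
    show "open (inside (?T2 \<union> ?T3))" "open (outside (?T2 \<union> ?T3))" using J23 by blast+
    show "?O \<subseteq> inside (?T2 \<union> ?T3) \<union> outside (?T2 \<union> ?T3)"
      using outside_no_overlap[of "?T1 \<union> ?T2"] outside_no_overlap[of "?T1 \<union> ?T3"]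
        inside_Un_outside[of "?T2 \<union> ?T3"] by blast
  qed (simp add: inside_Int_outside)
  then show False
  proof
    assume "?O \<subseteq> inside (?T2 \<union> ?T3)"
    moreover have "outside (?T1 \<union> ?T2 \<union> ?T3) \<subseteq> ?O"
      using outside_mono[of "?T1 \<union> ?T2" "?T1 \<union> ?T2 \<union> ?T3"]
        outside_mono[of "?T1 \<union> ?T3" "?T1 \<union> ?T2 \<union> ?T3"]
      by blast
    ultimately have "bounded (outside (?T1 \<union> ?T2 \<union> ?T3))"
      using J23(4) bounded_subset by blast
    moreover have "bounded (?T1 \<union> ?T2 \<union> ?T3)"
      using th unfolding theta_arcs_def by (simp add: bounded_arc_image)
    ultimately show False using unbounded_outside by blast
  next
    assume "?O \<subseteq> outside (?T2 \<union> ?T3)"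
    then show False using in23 J23(1) inside_Int_outside by blast
  qed
qed

text \<open>If no arc ran inside the cycle of the other two, each of the three insides would lie outside
  the other two cycles, and the connected set of points outside both \<open>c1 \<union> c2\<close> and \<open>c1 \<union> c3\<close>
  would contain both the unbounded face and the inside of \<open>c2 \<union> c3\<close>.\<close>
lemma theta_arc_inside_cycle:
  assumes th: "theta_arcs a b c1 c2 c3"
  shows "path_image c3 - {a, b} \<subseteq> inside (path_image c1 \<union> path_image c2)
       \<or> path_image c1 - {a, b} \<subseteq> inside (path_image c2 \<union> path_image c3)
       \<or> path_image c2 - {a, b} \<subseteq> inside (path_image c1 \<union> path_image c3)"
proof (rule ccontr)
  let ?T1 = "path_image c1" and ?T2 = "path_image c2" and ?T3 = "path_image c3"
  assume nq: "\<not> ?thesis"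
  have th132: "theta_arcs a b c1 c3 c2" and th231: "theta_arcs a b c2 c3 c1"
    and th321: "theta_arcs a b c3 c2 c1"
    using th by (auto simp: theta_arcs_def)
  have o3: "?T3 - {a, b} \<subseteq> outside (?T1 \<union> ?T2)"
    using theta_arc_interior_inside_or_outside[OF th] nq by blast
  have o1: "?T1 - {a, b} \<subseteq> outside (?T2 \<union> ?T3)"
    using theta_arc_interior_inside_or_outside[OF th231] nq by blast
  have o2: "?T2 - {a, b} \<subseteq> outside (?T1 \<union> ?T3)"
    using theta_arc_interior_inside_or_outside[OF th132] nq by blast
  have "?T3 - {a, b} \<subseteq> outside (?T2 \<union> ?T1)" "?T2 - {a, b} \<subseteq> outside (?T3 \<union> ?T1)"
    "?T1 - {a, b} \<subseteq> outside (?T3 \<union> ?T2)"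
    using o1 o2 o3 by (simp_all add: Un_commute)
  then have "inside (?T2 \<union> ?T3) \<subseteq> outside (?T1 \<union> ?T2) \<inter> outside (?T1 \<union> ?T3)"
    using theta_inside_subset_outside[OF th231 _ o1] theta_inside_subset_outside[OF th321]
    by (simp add: Un_commute)
  then show False
    using theta_insides_not_all_outside[OF th theta_inside_subset_outside[OF th o2 o3]
        theta_inside_subset_outside[OF th132 o3 o2]] by blast
qed

lemma theta_split_inside:
  assumes th: "theta_arcs a b c1 c2 c3"
    and c3_inside: "path_image c3 \<inter> inside (path_image c1 \<union> path_image c2) \<noteq> {}"
    and S: "connected S" "S \<subseteq> inside (path_image c1 \<union> path_image c2)" "S \<inter> path_image c3 = {}"
  shows "S \<subseteq> inside (path_image c1 \<union> path_image c3) \<or> S \<subseteq> inside (path_image c2 \<union> path_image c3)"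
proof -
  obtain "inside (path_image c1 \<union> path_image c3) \<inter> inside (path_image c2 \<union> path_image c3) = {}"
    "inside (path_image c1 \<union> path_image c3) \<union> inside (path_image c2 \<union> path_image c3)
       \<union> (path_image c3 - {a, b}) = inside (path_image c1 \<union> path_image c2)"
    by (rule split_inside_simple_closed_curve[of c1 a b c2 c3];
        use th c3_inside in \<open>auto simp: theta_arcs_def arc_imp_simple_path\<close>)
  moreover have "closed (path_image c1 \<union> path_image c3)" "closed (path_image c2 \<union> path_image c3)"
    using th unfolding theta_arcs_def by (auto simp: closed_arc_image)
  ultimately show ?thesis
    using S by (intro connected_subset_open_Un_disjoint) (auto simp: open_inside)
qed

section \<open>Walks\<close>

lemma successively_iff_nth:
  "successively R xs \<longleftrightarrow> (\<forall>i. Suc i < length xs \<longrightarrow> R (xs ! i) (xs ! Suc i))"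
proof (induction xs rule: induct_list012)
  case (3 x y zs)
  have "(\<forall>i. Suc i < length (x # y # zs) \<longrightarrow> R ((x # y # zs) ! i) ((x # y # zs) ! Suc i)) \<longleftrightarrow>
      R x y \<and> (\<forall>i. Suc i < length (y # zs) \<longrightarrow> R ((y # zs) ! i) ((y # zs) ! Suc i))"
    by (auto simp: All_less_Suc2 simp del: length_Cons)
  then show ?case using 3 by simp
qed auto

lemma successively_take: "successively R xs \<Longrightarrow> successively R (take n xs)"
  unfolding successively_iff_nth by auto

lemma is_cycle_iff_successively:
  "is_cycle V E cs \<longleftrightarrow>
     length cs \<ge> 3 \<and> distinct cs \<and> set cs \<subseteq> V \<and> successively E cs \<and> E (last cs) (hd cs)"
proof -
  have "(\<forall>i < length cs. E (cs ! i) (cs ! ((i + 1) mod length cs))) \<longleftrightarrow>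
      successively E cs \<and> E (last cs) (hd cs)" if "length cs \<ge> 3"
  proof -
    let ?n = "length cs"
    have "cs \<noteq> []" using that by auto
    then have ends: "last cs = cs ! (?n - 1)" "hd cs = cs ! 0"
      by (simp_all add: last_conv_nth hd_conv_nth)
    show ?thesis unfolding successively_iff_nth ends
    proof safe
      fix i assume "\<forall>i < ?n. E (cs ! i) (cs ! ((i + 1) mod ?n))" "Suc i < ?n"
      then show "E (cs ! i) (cs ! Suc i)" by (metis Suc_eq_plus1 Suc_lessD mod_less)
    next
      assume "\<forall>i < ?n. E (cs ! i) (cs ! ((i + 1) mod ?n))"
      then have "E (cs ! (?n - 1)) (cs ! ((?n - 1 + 1) mod ?n))" using that by simp
      moreover have "?n - 1 + 1 = ?n" using that by simp
      ultimately show "E (cs ! (?n - 1)) (cs ! 0)" by simp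
    next
      fix i assume "\<forall>i. Suc i < ?n \<longrightarrow> E (cs ! i) (cs ! Suc i)" "E (cs ! (?n - 1)) (cs ! 0)" "i < ?n"
      moreover have "Suc i < ?n \<or> Suc i = ?n" using \<open>i < ?n\<close> by linarith
      ultimately show "E (cs ! i) (cs ! ((i + 1) mod ?n))"
        by (metis Suc_eq_plus1 diff_Suc_1 mod_less mod_self)
    qed
  qed
  then show ?thesis unfolding is_cycle_def by blast
qed

lemma distinct_consecutive_not_hd_last:
  assumes "distinct xs" "length xs \<ge> 3" "Suc m < length xs"
  shows "\<not> {xs ! m, xs ! Suc m} \<subseteq> {hd xs, last xs}"
proof
  assume sub: "{xs ! m, xs ! Suc m} \<subseteq> {hd xs, last xs}"
  have "xs \<noteq> []" using assms(2) by auto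
  then have idx: "i = 0 \<or> i = length xs - 1" if "i < length xs" "xs ! i \<in> {hd xs, last xs}" for i
    using that nth_eq_iff_index_eq[OF assms(1)] by (auto simp: hd_conv_nth last_conv_nth)
  have "m = 0 \<or> m = length xs - 1" "Suc m = 0 \<or> Suc m = length xs - 1"
    using idx[of m] idx[of "Suc m"] sub assms(3) by auto
  then show False using assms(2,3) by arith
qed

section \<open>Outerplane drawings\<close>

fun walk_path :: "('a \<Rightarrow> complex) \<Rightarrow> ('a \<Rightarrow> 'a \<Rightarrow> real \<Rightarrow> complex) \<Rightarrow> 'a list \<Rightarrow> real \<Rightarrow> complex" where
  "walk_path p g (x # y # zs) = (if zs = [] then g x y else g x y +++ walk_path p g (y # zs))"
| "walk_path p g _ = linepath 0 0"

locale outerplane_drawing =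
  fixes V :: "'a set" and E :: "'a \<Rightarrow> 'a \<Rightarrow> bool" and p :: "'a \<Rightarrow> complex"
    and g :: "'a \<Rightarrow> 'a \<Rightarrow> real \<Rightarrow> complex"
  assumes simple: "simple_graph V E" and drawing: "plane_drawing V E p g"
    and vertices_outer: "\<forall>v\<in>V. p v \<in> closure (outside (drawing_set V E p g))"

lemma outerplanar_iff_outerplane_drawing:
  "outerplanar V E \<longleftrightarrow> (\<exists>p g. outerplane_drawing V E p g)"
  unfolding outerplanar_def outerplane_drawing_def by blast

context outerplane_drawing
begin

lemma adj_in_vertices: "E u v \<Longrightarrow> u \<in> V \<and> v \<in> V"
  using simple unfolding simple_graph_def by blast

lemma adj_sym: "E u v \<Longrightarrow> E v u"
  using simple unfolding simple_graph_def by blast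

lemma adj_irrefl: "E u v \<Longrightarrow> u \<noteq> v"
  using simple unfolding simple_graph_def by blast

lemma p_eq_iff: "u \<in> V \<Longrightarrow> v \<in> V \<Longrightarrow> p u = p v \<longleftrightarrow> u = v"
  using drawing unfolding plane_drawing_def inj_on_def by blast

lemma successively_rev_adj: "successively E xs \<Longrightarrow> successively E (rev xs)"
  using adj_sym by (simp add: successively_mono)

lemma edge_arc: "E u v \<Longrightarrow> arc (g u v) \<and> pathstart (g u v) = p u \<and> pathfinish (g u v) = p v"
  using drawing unfolding plane_drawing_def by blast

lemma path_image_edge_sym: "E u v \<Longrightarrow> path_image (g v u) = path_image (g u v)"
  using drawing unfolding plane_drawing_def by (metis path_image_reversepath)

lemma edge_images_Int:
  "E u v \<Longrightarrow> E x y \<Longrightarrow> {u, v} \<noteq> {x, y} \<Longrightarrow>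
    path_image (g u v) \<inter> path_image (g x y) \<subseteq> p ` ({u, v} \<inter> {x, y})"
  using drawing unfolding plane_drawing_def by blast

lemma vertex_on_edge_image: "E u v \<Longrightarrow> w \<in> V \<Longrightarrow> p w \<in> path_image (g u v) \<Longrightarrow> w = u \<or> w = v"
  using drawing unfolding plane_drawing_def by blast

lemma edge_ends_on_image: "E u v \<Longrightarrow> p u \<in> path_image (g u v) \<and> p v \<in> path_image (g u v)"
  using edge_arc by (metis pathfinish_in_path_image pathstart_in_path_image)

lemma edge_image_subset_drawing: "E u v \<Longrightarrow> path_image (g u v) \<subseteq> drawing_set V E p g"
  unfolding drawing_set_def by blast

lemma vertex_not_inside:
  assumes "w \<in> V" "closed K" "K \<subseteq> drawing_set V E p g"
  shows "p w \<notin> inside K"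
proof
  assume "p w \<in> inside K"
  moreover have "p w \<in> closure (outside K)"
    using vertices_outer assms(1) closure_mono[OF outside_mono[OF assms(3)]] by blast
  moreover have "inside K \<inter> closure (outside K) = {}"
    using open_Int_closure_eq_empty[OF open_inside[OF assms(2)]] inside_Int_outside by blast
  ultimately show False by blast
qed

lemma walk_path_ends_image:
  assumes "successively E xs" "length xs \<ge> 2"
  shows "pathstart (walk_path p g xs) = p (hd xs)" "pathfinish (walk_path p g xs) = p (last xs)"
    "path_image (walk_path p g xs) = (\<Union>m < length xs - 1. path_image (g (xs ! m) (xs ! Suc m)))"
proof -
  have "pathstart (walk_path p g xs) = p (hd xs) \<and> pathfinish (walk_path p g xs) = p (last xs) \<and>
    path_image (walk_path p g xs) = (\<Union>m < length xs - 1. path_image (g (xs ! m) (xs ! Suc m)))"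
    using assms
  proof (induction xs rule: induct_list012)
    case (3 x y zs)
    have "path_image (g x y) \<union> (\<Union>m < length zs. path_image (g ((y # zs) ! m) ((y # zs) ! Suc m)))
        = (\<Union>m < Suc (length zs). path_image (g ((x # y # zs) ! m) ((x # y # zs) ! Suc m)))"
      by (simp add: lessThan_Suc_eq_insert_0 del: lessThan_Suc)
    moreover have "E x y" using "3.prems" by simp
    ultimately show ?case
      using 3 edge_arc[of x y] by (cases zs) (auto simp: path_image_join)
  qed auto
  then show "pathstart (walk_path p g xs) = p (hd xs)" "pathfinish (walk_path p g xs) = p (last xs)"
    "path_image (walk_path p g xs) = (\<Union>m < length xs - 1. path_image (g (xs ! m) (xs ! Suc m)))"
    by blast+
qed

lemma walk_subset_vertices: "successively E xs \<Longrightarrow> length xs \<ge> 2 \<Longrightarrow> set xs \<subseteq> V"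
proof (induction xs rule: induct_list012)
  case (3 x y zs)
  then show ?case by (cases zs) (auto dest: adj_in_vertices)
qed auto

lemma walk_path_subset_drawing:
  assumes "successively E xs" "length xs \<ge> 2"
  shows "path_image (walk_path p g xs) \<subseteq> drawing_set V E p g"
  using assms edge_image_subset_drawing
  unfolding walk_path_ends_image(3)[OF assms] successively_iff_nth
    by (fastforce simp: less_diff_conv)

lemma vertex_on_walk_path_iff:
  assumes "successively E xs" "length xs \<ge> 2" "w \<in> V"
  shows "p w \<in> path_image (walk_path p g xs) \<longleftrightarrow> w \<in> set xs"
proof
  assume "p w \<in> path_image (walk_path p g xs)"
  then obtain m where m: "Suc m < length xs" "p w \<in> path_image (g (xs ! m) (xs ! Suc m))"
    using walk_path_ends_image(3)[OF assms(1,2)] by (auto simp: less_diff_conv)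
  then have "E (xs ! m) (xs ! Suc m)" using assms(1) unfolding successively_iff_nth by blast
  then have "w = xs ! m \<or> w = xs ! Suc m" using vertex_on_edge_image assms(3) m(2) by blast
  then show "w \<in> set xs" using m(1) by auto
next
  assume "w \<in> set xs"
  then obtain i where i: "i < length xs" "xs ! i = w" by (auto simp: in_set_conv_nth)
  define m where "m = (if Suc i < length xs then i else i - 1)"
  have m: "Suc m < length xs" "w = xs ! m \<or> w = xs ! Suc m"
    using i assms(2) unfolding m_def by auto
  then have "p w \<in> path_image (g (xs ! m) (xs ! Suc m))"
    using edge_ends_on_image assms(1) unfolding successively_iff_nth by blast
  then show "p w \<in> path_image (walk_path p g xs)"
    using walk_path_ends_image(3)[OF assms(1,2)] m(1) by auto
qed

lemma edge_walk_path_Int: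
  assumes "successively E xs" "length xs \<ge> 2" "E u v"
    and "\<forall>m. Suc m < length xs \<longrightarrow> {u, v} \<noteq> {xs ! m, xs ! Suc m}"
  shows "path_image (g u v) \<inter> path_image (walk_path p g xs) \<subseteq> p ` ({u, v} \<inter> set xs)"
proof
  fix z assume z: "z \<in> path_image (g u v) \<inter> path_image (walk_path p g xs)"
  then obtain m where m: "Suc m < length xs" "z \<in> path_image (g (xs ! m) (xs ! Suc m))"
    using walk_path_ends_image(3)[OF assms(1,2)] by (auto simp: less_diff_conv)
  have "E (xs ! m) (xs ! Suc m)" using assms(1) m(1) unfolding successively_iff_nth by blast
  then have "z \<in> p ` ({u, v} \<inter> {xs ! m, xs ! Suc m})"
    using edge_images_Int[OF assms(3)] assms(4) z m by blast
  then show "z \<in> p ` ({u, v} \<inter> set xs)" using m(1) by auto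
qed

lemma walk_paths_Int:
  assumes "successively E xs" "length xs \<ge> 2" "successively E ys" "length ys \<ge> 2"
    and "\<forall>m m'. Suc m < length xs \<longrightarrow> Suc m' < length ys \<longrightarrow>
      {xs ! m, xs ! Suc m} \<noteq> {ys ! m', ys ! Suc m'}"
  shows "path_image (walk_path p g xs) \<inter> path_image (walk_path p g ys) \<subseteq> p ` (set xs \<inter> set ys)"
proof
  fix z assume z: "z \<in> path_image (walk_path p g xs) \<inter> path_image (walk_path p g ys)"
  then obtain m where m: "Suc m < length xs" "z \<in> path_image (g (xs ! m) (xs ! Suc m))"
    using walk_path_ends_image(3)[OF assms(1,2)] by (auto simp: less_diff_conv)
  have "E (xs ! m) (xs ! Suc m)" using assms(1) m(1) unfolding successively_iff_nth by blast
  then have "z \<in> p ` ({xs ! m, xs ! Suc m} \<inter> set ys)"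
    using edge_walk_path_Int[OF assms(3,4)] assms(5) z m by blast
  then show "z \<in> p ` (set xs \<inter> set ys)" using m(1) by auto
qed

lemma arc_walk_path: "successively E xs \<Longrightarrow> length xs \<ge> 2 \<Longrightarrow> distinct xs \<Longrightarrow> arc (walk_path p g xs)"
proof (induction xs rule: induct_list012)
  case (3 x y zs)
  show ?case
  proof (cases "zs = []")
    case True
    then show ?thesis using 3 edge_arc[of x y] by simp
  next
    case False
    have xy: "E x y" and yzs: "successively E (y # zs)" "length (y # zs) \<ge> 2"
      using 3 False by (auto simp: Suc_le_eq)
    have "path_image (g x y) \<inter> path_image (walk_path p g (y # zs)) \<subseteq> p ` ({x, y} \<inter> set (y # zs))"
      using "3.prems"(3) by (intro edge_walk_path_Int[OF yzs xy]) (auto simp: doubleton_eq_iff)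
    also have "\<dots> = {pathstart (walk_path p g (y # zs))}"
      using "3.prems"(3) walk_path_ends_image(1)[OF yzs] by auto
    finally have "path_image (g x y) \<inter> path_image (walk_path p g (y # zs))
        \<subseteq> {pathstart (walk_path p g (y # zs))}" .
    moreover have "arc (walk_path p g (y # zs))" using 3 yzs by simp
    ultimately show ?thesis
      using False edge_arc[OF xy] walk_path_ends_image(1)[OF yzs] by (auto intro!: arc_join)
  qed
qed auto

lemma path_image_walk_path_rev:
  assumes "successively E xs" "length xs \<ge> 2"
  shows "path_image (walk_path p g (rev xs)) = path_image (walk_path p g xs)"
proof -
  let ?n = "length xs" and ?F = "\<lambda>m. path_image (g (xs ! m) (xs ! Suc m))"
  have rev_walk: "successively E (rev xs)" using successively_rev_adj[OF assms(1)] .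
  have "path_image (g (rev xs ! m) (rev xs ! Suc m)) = ?F (?n - 2 - m)" if "m < ?n - 1" for m
  proof -
    have "rev xs ! m = xs ! Suc (?n - 2 - m)" "rev xs ! Suc m = xs ! (?n - 2 - m)"
      using that by (simp_all add: rev_nth Suc_diff_Suc)
    moreover have "E (xs ! (?n - 2 - m)) (xs ! Suc (?n - 2 - m))"
      using assms that unfolding successively_iff_nth by simp
    ultimately show ?thesis by (simp add: path_image_edge_sym)
  qed
  then have "path_image (walk_path p g (rev xs)) = (\<Union>m < ?n - 1. ?F (?n - 2 - m))"
    using walk_path_ends_image(3)[OF rev_walk] assms(2) by simp
  also have "\<dots> = \<Union> (?F ` (\<lambda>m. ?n - 2 - m) ` {..< ?n - 1})" by (simp add: image_image)
  also have "(\<lambda>m. ?n - 2 - m) ` {..< ?n - 1} = {..< ?n - 1}"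
  proof
    show "(\<lambda>m. ?n - 2 - m) ` {..< ?n - 1} \<subseteq> {..< ?n - 1}" using assms(2) by auto
    show "{..< ?n - 1} \<subseteq> (\<lambda>m. ?n - 2 - m) ` {..< ?n - 1}"
    proof
      fix m assume "m \<in> {..< ?n - 1}"
      then have "m = ?n - 2 - (?n - 2 - m)" "?n - 2 - m \<in> {..< ?n - 1}" using assms(2) by auto
      then show "m \<in> (\<lambda>m. ?n - 2 - m) ` {..< ?n - 1}" by (rule image_eqI)
    qed
  qed
  finally show ?thesis using walk_path_ends_image(3)[OF assms] by simp
qed

lemma walk_paths_Int_ends:
  assumes "successively E xs" "distinct xs" "length xs \<ge> 3" "successively E ys" "length ys \<ge> 2"
    and "set xs \<inter> set ys = {hd xs, last xs}"
  shows "path_image (walk_path p g xs) \<inter> path_image (walk_path p g ys) = {p (hd xs), p (last xs)}"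
proof
  have x2: "length xs \<ge> 2" using assms(3) by simp
  have "path_image (walk_path p g xs) \<inter> path_image (walk_path p g ys) \<subseteq> p ` (set xs \<inter> set ys)"
  proof (rule walk_paths_Int[OF assms(1) x2 assms(4,5)], intro allI impI notI)
    fix m m' assume m: "Suc m < length xs" "Suc m' < length ys"
      and eq: "{xs ! m, xs ! Suc m} = {ys ! m', ys ! Suc m'}"
    have "{xs ! m, xs ! Suc m} \<subseteq> set xs" "{ys ! m', ys ! Suc m'} \<subseteq> set ys"
      using m by auto
    then have "{xs ! m, xs ! Suc m} \<subseteq> set xs \<inter> set ys" using eq by blast
    then show False using distinct_consecutive_not_hd_last[OF assms(2,3) m(1)] assms(6) by blast
  qed
  then show "path_image (walk_path p g xs) \<inter> path_image (walk_path p g ys)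
      \<subseteq> {p (hd xs), p (last xs)}"
    using assms(6) by simp
  have "xs \<noteq> []" using assms(3) by auto
  then have "hd xs \<in> set ys \<inter> V" "last xs \<in> set ys \<inter> V"
    using assms(6) walk_subset_vertices[OF assms(1) x2] by auto
  then show "{p (hd xs), p (last xs)}
      \<subseteq> path_image (walk_path p g xs) \<inter> path_image (walk_path p g ys)"
    using vertex_on_walk_path_iff[OF assms(1) x2] vertex_on_walk_path_iff[OF assms(4,5)] \<open>xs \<noteq> []\<close>
    by auto
qed

lemma walk_path_interior_not_inside:
  assumes "successively E xs" "distinct xs" "length xs \<ge> 3" "closed K" "K \<subseteq> drawing_set V E p g"
  shows "\<not> path_image (walk_path p g xs) - {p (hd xs), p (last xs)} \<subseteq> inside K"
proof
  assume inside: "path_image (walk_path p g xs) - {p (hd xs), p (last xs)} \<subseteq> inside K"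
  have x2: "length xs \<ge> 2" using assms(3) by simp
  have xs_V: "set xs \<subseteq> V" using walk_subset_vertices[OF assms(1) x2] .
  have "xs \<noteq> []" using assms(3) by auto
  then have "hd xs = xs ! 0" "last xs = xs ! (length xs - 1)"
    by (simp_all add: hd_conv_nth last_conv_nth)
  moreover have "1 < length xs" "0 < length xs" "length xs - 1 < length xs" "1 \<noteq> length xs - 1"
    using assms(3) by auto
  ultimately have "xs ! 1 \<noteq> hd xs" "xs ! 1 \<noteq> last xs"
    by (simp_all add: nth_eq_iff_index_eq[OF assms(2)])
  moreover have "xs ! 1 \<in> set xs" "hd xs \<in> set xs" "last xs \<in> set xs"
    using assms(3) \<open>xs \<noteq> []\<close> by auto
  ultimately have "p (xs ! 1) \<in> path_image (walk_path p g xs) - {p (hd xs), p (last xs)}"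
    using vertex_on_walk_path_iff[OF assms(1) x2] p_eq_iff xs_V by auto
  then show False
    using inside vertex_not_inside[OF _ assms(4,5), of "xs ! 1"] xs_V \<open>xs ! 1 \<in> set xs\<close>
    by blast
qed

lemma theta_arcs_walk_paths:
  assumes "a \<noteq> b"
    and xs: "successively E xs" "distinct xs" "length xs \<ge> 3" "hd xs = a" "last xs = b"
    and ys: "successively E ys" "distinct ys" "length ys \<ge> 3" "hd ys = a" "last ys = b"
    and zs: "successively E zs" "distinct zs" "length zs \<ge> 2" "hd zs = a" "last zs = b"
    and "set xs \<inter> set ys = {a, b}" "set xs \<inter> set zs = {a, b}" "set ys \<inter> set zs = {a, b}"
  shows "theta_arcs (p a) (p b) (walk_path p g xs) (walk_path p g ys) (walk_path p g zs)"
proof -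
  have "xs \<noteq> []" using xs(3) by auto
  then have "a \<in> V" "b \<in> V" using walk_subset_vertices[OF xs(1)] xs(3-5) by auto
  then show ?thesis
    unfolding theta_arcs_def using assms p_eq_iff arc_walk_path walk_path_ends_image(1,2)
      walk_paths_Int_ends[OF xs(1-3) ys(1)] walk_paths_Int_ends[OF xs(1-3) zs(1)]
      walk_paths_Int_ends[OF ys(1-3) zs(1)]
    by auto
qed

lemma no_theta_subgraph:
  assumes "a \<noteq> b"
    and xs: "successively E xs" "distinct xs" "length xs \<ge> 3" "hd xs = a" "last xs = b"
    and ys: "successively E ys" "distinct ys" "length ys \<ge> 3" "hd ys = a" "last ys = b"
    and zs: "successively E zs" "distinct zs" "length zs \<ge> 3" "hd zs = a" "last zs = b"
    and "set xs \<inter> set ys = {a, b}" "set xs \<inter> set zs = {a, b}" "set ys \<inter> set zs = {a, b}"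
  shows False
proof -
  let ?X = "path_image (walk_path p g xs)" and ?Y = "path_image (walk_path p g ys)"
    and ?Z = "path_image (walk_path p g zs)"
  have "arc (walk_path p g xs)" "arc (walk_path p g ys)" "arc (walk_path p g zs)"
    using arc_walk_path xs ys zs by simp_all
  then have "closed ?X" "closed ?Y" "closed ?Z" by (simp_all add: closed_arc_image)
  moreover have "?X \<subseteq> drawing_set V E p g" "?Y \<subseteq> drawing_set V E p g" "?Z \<subseteq> drawing_set V E p g"
    using walk_path_subset_drawing xs ys zs by simp_all
  moreover have "length zs \<ge> 2" using zs(3) by simp
  ultimately show False
    using theta_arc_inside_cycle[OF
        theta_arcs_walk_paths[OF assms(1) xs ys zs(1,2) _ zs(4,5) assms(17-19)]]
      xs ys zs
      walk_path_interior_not_inside[OF zs(1-3), of "?X \<union> ?Y"]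
      walk_path_interior_not_inside[OF xs(1-3), of "?Y \<union> ?Z"]
      walk_path_interior_not_inside[OF ys(1-3), of "?X \<union> ?Z"]
    by auto
qed

lemma edge_interior_not_inside:
  assumes "E u v" "closed K" "K \<subseteq> drawing_set V E p g" "p v \<notin> K"
  shows "\<not> path_image (g u v) - {p u, p v} \<subseteq> inside K"
proof
  let ?S = "path_image (g u v) - {p u}"
  assume inside: "path_image (g u v) - {p u, p v} \<subseteq> inside K"
  have arc: "arc (g u v)" "pathstart (g u v) = p u" "pathfinish (g u v) = p v"
    using edge_arc[OF assms(1)] by auto
  obtain x where x: "x \<in> path_image (g u v) - {p u, p v}"
    using nonempty_simple_path_endless[OF arc_imp_simple_path[OF arc(1)]] arc by auto
  have "?S \<inter> K = {}" using inside assms(4) inside_no_overlap by fast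
  moreover have "connected ?S" using connected_arc_image_Diff_pathstart[OF arc(1)] arc(2) by simp
  ultimately have "?S \<subseteq> connected_component_set (- K) x"
    using x by (intro connected_component_maximal) auto
  moreover have v: "v \<in> V" "p v \<in> ?S"
    using adj_in_vertices[OF assms(1)] adj_irrefl[OF assms(1)] p_eq_iff
      edge_ends_on_image[OF assms(1)]
    by auto
  ultimately have "connected_component_set (- K) (p v) = connected_component_set (- K) x"
    by (metis connected_component_eq mem_Collect_eq subsetD)
  then have "p v \<in> inside K" using x inside assms(4) unfolding inside_def by auto
  then show False using vertex_not_inside[OF v(1) assms(2,3)] by blast
qed

end

section \<open>Cycles and their chords\<close>

definition cycle_segment :: "'a list \<Rightarrow> nat \<Rightarrow> nat \<Rightarrow> 'a list" where
  "cycle_segment cs i L = map (\<lambda>t. cs ! ((i + t) mod length cs)) [0..<Suc L]"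

lemma length_cycle_segment [simp]: "length (cycle_segment cs i L) = Suc L"
  by (simp add: cycle_segment_def)

lemma nth_cycle_segment: "t \<le> L \<Longrightarrow> cycle_segment cs i L ! t = cs ! ((i + t) mod length cs)"
  unfolding cycle_segment_def by (simp del: upt_Suc add: nth_map_upt less_Suc_eq_le)

lemma hd_cycle_segment: "hd (cycle_segment cs i L) = cs ! (i mod length cs)"
  by (simp add: cycle_segment_def upt_conv_Cons del: upt_Suc)

lemma last_cycle_segment: "last (cycle_segment cs i L) = cs ! ((i + L) mod length cs)"
  by (simp add: cycle_segment_def)

lemma set_cycle_segment:
  "x \<in> set (cycle_segment cs i L) \<longleftrightarrow> (\<exists>t\<le>L. x = cs ! ((i + t) mod length cs))"
  unfolding cycle_segment_def by (auto simp: image_iff less_Suc_eq_le simp del: upt_Suc)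

lemma set_cycle_segment_subset: "cs \<noteq> [] \<Longrightarrow> set (cycle_segment cs i L) \<subseteq> set cs"
  unfolding cycle_segment_def by (auto intro!: nth_mem)

lemma add_mod_inj:
  fixes i t t' n :: nat
  assumes "(i + t) mod n = (i + t') mod n" "t < n" "t' < n"
  shows "t = t'"
proof -
  have "t = t'" if eq: "(i + t) mod n = (i + t') mod n" and lt: "t' < n" and le: "t \<le> t'" for t t'
  proof -
    obtain s where "i + t' = i + t + n * s" using mod_eq_nat1E[OF eq[symmetric]] le by auto
    then show ?thesis using lt by (cases s) auto
  qed
  from this[of t t'] this[of t' t] assms show ?thesis by linarith
qed

lemma distinct_cycle_segment: "distinct cs \<Longrightarrow> L < length cs \<Longrightarrow> distinct (cycle_segment cs i L)"
  unfolding cycle_segment_def distinct_map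
proof
  assume cs: "distinct cs" "L < length cs"
  show "inj_on (\<lambda>t. cs ! ((i + t) mod length cs)) (set [0..<Suc L])"
  proof (rule inj_onI)
    fix t t' assume "t \<in> set [0..<Suc L]" "t' \<in> set [0..<Suc L]"
      and eq: "cs ! ((i + t) mod length cs) = cs ! ((i + t') mod length cs)"
    then have "t < length cs" "t' < length cs" using cs(2) by auto
    moreover have "length cs > 0" using cs(2) by linarith
    then have "(i + t) mod length cs < length cs" "(i + t') mod length cs < length cs" by simp_all
    then have "(i + t) mod length cs = (i + t') mod length cs"
      using eq nth_eq_iff_index_eq[OF cs(1)] by blast
    ultimately show "t = t'" using add_mod_inj by blast
  qed
qed simp

lemma successively_cycle_segment:
  assumes "is_cycle V E cs"
  shows "successively E (cycle_segment cs i L)"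
  unfolding successively_iff_nth
proof (intro allI impI)
  fix t assume t: "Suc t < length (cycle_segment cs i L)"
  have "length cs > 0" using assms unfolding is_cycle_def by auto
  then have "E (cs ! ((i + t) mod length cs)) (cs ! (((i + t) mod length cs + 1) mod length cs))"
    using assms unfolding is_cycle_def by simp
  then show "E (cycle_segment cs i L ! t) (cycle_segment cs i L ! Suc t)"
    using t by (simp add: nth_cycle_segment mod_Suc_eq)
qed

lemma nth_in_cycle_segment_iff:
  assumes "distinct cs" "i \<le> j" "j < length cs" "m < length cs"
  shows "cs ! m \<in> set (cycle_segment cs i (j - i)) \<longleftrightarrow> i \<le> m \<and> m \<le> j"
proof -
  have "cs ! m = cs ! ((i + t) mod length cs) \<longleftrightarrow> m = i + t" if "t \<le> j - i" for t
    using assms that nth_eq_iff_index_eq[OF assms(1)] by auto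
  then have "cs ! m \<in> set (cycle_segment cs i (j - i)) \<longleftrightarrow> (\<exists>t\<le>j - i. m = i + t)"
    unfolding set_cycle_segment by auto
  also have "\<dots> \<longleftrightarrow> i \<le> m \<and> m \<le> j"
    using assms(2) by (auto intro: exI[of _ "m - i"])
  finally show ?thesis .
qed

lemma nth_in_cycle_segment_wrap_iff:
  assumes "distinct cs" "i < j" "j < length cs" "m < length cs"
  shows "cs ! m \<in> set (cycle_segment cs j (length cs - (j - i))) \<longleftrightarrow> m \<le> i \<or> j \<le> m"
proof -
  let ?n = "length cs"
  have "?n > 0" using assms by linarith
  then have "\<And>t. (j + t) mod ?n < ?n" by simp
  then have "cs ! m \<in> set (cycle_segment cs j (?n - (j - i))) \<longleftrightarrow>
      (\<exists>t\<le>?n - (j - i). m = (j + t) mod ?n)"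
    unfolding set_cycle_segment using nth_eq_iff_index_eq[OF assms(1) assms(4)] by blast
  also have "\<dots> \<longleftrightarrow> m \<le> i \<or> j \<le> m"
  proof
    assume "\<exists>t\<le>?n - (j - i). m = (j + t) mod ?n"
    then obtain t where t: "t \<le> ?n - (j - i)" "m = (j + t) mod ?n" by blast
    have "t \<le> ?n" using t(1) by simp
    then have "m = (if j + t < ?n then j + t else j + t - ?n)"
      using assms(3) t(2) by (auto simp: le_mod_geq)
    then show "m \<le> i \<or> j \<le> m" using t(1) assms by (auto split: if_splits)
  next
    assume "m \<le> i \<or> j \<le> m"
    then consider "j \<le> m" | "m \<le> i" "m < j" by linarith
    then show "\<exists>t\<le>?n - (j - i). m = (j + t) mod ?n"
    proof cases
      case 1
      then show ?thesis using assms by (intro exI[of _ "m - j"]) auto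
    next
      case 2
      then have "(j + (m + ?n - j)) mod ?n = m" "m + ?n - j \<le> ?n - (j - i)" using assms by auto
      then show ?thesis by (intro exI[of _ "m + ?n - j"]) auto
    qed
  qed
  finally show ?thesis .
qed

lemma cycle_segments:
  assumes cyc: "is_cycle V E cs"
    and ij: "i < j" "j < length cs" "2 \<le> j - i" "2 \<le> length cs - (j - i)"
  defines "P1 \<equiv> cycle_segment cs i (j - i)" and "P2 \<equiv> cycle_segment cs j (length cs - (j - i))"
  shows "successively E P1" "distinct P1" "length P1 \<ge> 3" "hd P1 = cs ! i" "last P1 = cs ! j"
    and "successively E P2" "distinct P2" "length P2 \<ge> 3" "hd P2 = cs ! j" "last P2 = cs ! i"
    and "\<And>m. m < length cs \<Longrightarrow> cs ! m \<in> set P1 \<longleftrightarrow> i \<le> m \<and> m \<le> j"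
    and "\<And>m. m < length cs \<Longrightarrow> cs ! m \<in> set P2 \<longleftrightarrow> m \<le> i \<or> j \<le> m"
    and "set P1 \<inter> set P2 = {cs ! i, cs ! j}"
proof -
  let ?n = "length cs"
  have dcs: "distinct cs" using cyc unfolding is_cycle_def by blast
  show "successively E P1" "successively E P2"
    unfolding P1_def P2_def using successively_cycle_segment[OF cyc] by auto
  show "distinct P1" "distinct P2"
    unfolding P1_def P2_def using distinct_cycle_segment[OF dcs] ij by auto
  show "length P1 \<ge> 3" "length P2 \<ge> 3" unfolding P1_def P2_def using ij by auto
  show "hd P1 = cs ! i" "last P1 = cs ! j"
    unfolding P1_def using ij by (auto simp: hd_cycle_segment last_cycle_segment)
  have "j + (?n - (j - i)) = i + ?n" using ij by simp
  then show "hd P2 = cs ! j" "last P2 = cs ! i"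
    unfolding P2_def using ij by (auto simp: hd_cycle_segment last_cycle_segment)
  show in1: "\<And>m. m < ?n \<Longrightarrow> cs ! m \<in> set P1 \<longleftrightarrow> i \<le> m \<and> m \<le> j"
    unfolding P1_def using nth_in_cycle_segment_iff[OF dcs] ij by simp
  show in2: "\<And>m. m < ?n \<Longrightarrow> cs ! m \<in> set P2 \<longleftrightarrow> m \<le> i \<or> j \<le> m"
    unfolding P2_def using nth_in_cycle_segment_wrap_iff[OF dcs] ij by simp
  have "cs \<noteq> []" using ij by auto
  then have sub: "set P1 \<subseteq> set cs" unfolding P1_def by (rule set_cycle_segment_subset)
  show "set P1 \<inter> set P2 = {cs ! i, cs ! j}"
  proof
    show "set P1 \<inter> set P2 \<subseteq> {cs ! i, cs ! j}"
    proof
      fix x assume x: "x \<in> set P1 \<inter> set P2"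
      then have "x \<in> set cs" using sub by blast
      then obtain m where m: "m < ?n" "x = cs ! m" by (metis in_set_conv_nth)
      then have "i \<le> m \<and> m \<le> j" "m \<le> i \<or> j \<le> m" using in1 in2 x by auto
      then show "x \<in> {cs ! i, cs ! j}" using m by auto
    qed
    show "{cs ! i, cs ! j} \<subseteq> set P1 \<inter> set P2"
      using in1[of i] in1[of j] in2[of i] in2[of j] ij by auto
  qed
qed

lemma mod_segments_cover:
  fixes i j n :: nat
  assumes "i < j" "j < n"
  shows "(\<lambda>t. (i + t) mod n) ` {..<j - i} \<union> (\<lambda>t. (j + t) mod n) ` {..<n - (j - i)} = {..<n}"
proof
  show "(\<lambda>t. (i + t) mod n) ` {..<j - i} \<union> (\<lambda>t. (j + t) mod n) ` {..<n - (j - i)} \<subseteq> {..<n}"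
    using assms by auto
  show "{..<n} \<subseteq> (\<lambda>t. (i + t) mod n) ` {..<j - i} \<union> (\<lambda>t. (j + t) mod n) ` {..<n - (j - i)}"
  proof
    fix m assume m: "m \<in> {..<n}"
    consider "i \<le> m" "m < j" | "j \<le> m" | "m < i" by linarith
    then show "m \<in> (\<lambda>t. (i + t) mod n) ` {..<j - i} \<union> (\<lambda>t. (j + t) mod n) ` {..<n - (j - i)}"
    proof cases
      case 1
      then have "m = (i + (m - i)) mod n" "m - i \<in> {..<j - i}" using m by auto
      then show ?thesis by blast
    next
      case 2
      then have "m = (j + (m - j)) mod n" "m - j \<in> {..<n - (j - i)}" using m assms by auto
      then show ?thesis by blast
    next
      case 3
      then have "m = (j + (m + n - j)) mod n" "m + n - j \<in> {..<n - (j - i)}" using m assms by auto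
      then show ?thesis by blast
    qed
  qed
qed

context outerplane_drawing
begin

definition cycle_edge_image :: "'a list \<Rightarrow> nat \<Rightarrow> complex set" where
  "cycle_edge_image cs m = path_image (g (cs ! m) (cs ! ((m + 1) mod length cs)))"

definition cycle_image :: "'a list \<Rightarrow> complex set" where
  "cycle_image cs = (\<Union>m < length cs. cycle_edge_image cs m)"

lemma path_image_walk_path_cycle_segment:
  assumes "is_cycle V E cs" "L \<ge> 1"
  shows "path_image (walk_path p g (cycle_segment cs i L))
    = (\<Union>t<L. cycle_edge_image cs ((i + t) mod length cs))"
proof -
  have "length cs > 0" using assms(1) unfolding is_cycle_def by auto
  have "path_image (g (cycle_segment cs i L ! t) (cycle_segment cs i L ! Suc t)) =
      cycle_edge_image cs ((i + t) mod length cs)" if "t < L" for t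
    using that unfolding cycle_edge_image_def by (simp add: nth_cycle_segment mod_Suc_eq)
  then show ?thesis
    using walk_path_ends_image(3)[OF successively_cycle_segment[OF assms(1)]] assms(2) by simp
qed

lemma cycle_image_segments:
  assumes cyc: "is_cycle V E cs"
    and ij: "i < j" "j < length cs" "2 \<le> j - i" "2 \<le> length cs - (j - i)"
  defines "P1 \<equiv> cycle_segment cs i (j - i)" and "P2 \<equiv> cycle_segment cs j (length cs - (j - i))"
  shows "path_image (walk_path p g P1) \<union> path_image (walk_path p g (rev P2)) = cycle_image cs"
proof -
  let ?n = "length cs"
  note seg = cycle_segments[OF cyc ij, folded P1_def P2_def]
  have "path_image (walk_path p g (rev P2)) = path_image (walk_path p g P2)"
    using path_image_walk_path_rev seg by simp
  then have "path_image (walk_path p g P1) \<union> path_image (walk_path p g (rev P2)) =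
      (\<Union>t<j - i. cycle_edge_image cs ((i + t) mod ?n))
        \<union> (\<Union>t<?n - (j - i). cycle_edge_image cs ((j + t) mod ?n))"
    unfolding P1_def P2_def using path_image_walk_path_cycle_segment[OF cyc] ij by simp
  also have "\<dots> = (\<Union>m \<in> (\<lambda>t. (i + t) mod ?n) ` {..<j - i} \<union> (\<lambda>t. (j + t) mod ?n) ` {..<?n - (j - i)}.
      cycle_edge_image cs m)"
    by auto
  also have "\<dots> = cycle_image cs" unfolding mod_segments_cover[OF ij(1,2)] cycle_image_def ..
  finally show ?thesis .
qed

lemma cycle_chord_theta_arcs:
  assumes cyc: "is_cycle V E cs"
    and ij: "i < j" "j < length cs" "2 \<le> j - i" "2 \<le> length cs - (j - i)"
    and chord: "E (cs ! i) (cs ! j)"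
  defines "P1 \<equiv> cycle_segment cs i (j - i)" and "P2 \<equiv> cycle_segment cs j (length cs - (j - i))"
  shows "theta_arcs (p (cs ! i)) (p (cs ! j))
    (walk_path p g P1) (walk_path p g (rev P2)) (g (cs ! i) (cs ! j))"
proof -
  note seg = cycle_segments[OF cyc ij, folded P1_def P2_def]
  have "distinct cs" using cyc unfolding is_cycle_def by blast
  then have "cs ! i \<noteq> cs ! j" using ij nth_eq_iff_index_eq by fastforce
  moreover have "successively E (rev P2)"
    using successively_rev_adj[OF seg(6)] .
  moreover have "set P1 \<inter> set [cs ! i, cs ! j] = {cs ! i, cs ! j}"
    "set P2 \<inter> set [cs ! i, cs ! j] = {cs ! i, cs ! j}"
    using seg(13) by auto
  ultimately show ?thesis
    using theta_arcs_walk_paths[of "cs ! i" "cs ! j" P1 "rev P2" "[cs ! i, cs ! j]"] seg chord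
    by (simp add: hd_rev last_rev)
qed

lemma chord_inside_cycle:
  assumes cyc: "is_cycle V E cs"
    and ij: "i < j" "j < length cs" "2 \<le> j - i" "2 \<le> length cs - (j - i)"
    and chord: "E (cs ! i) (cs ! j)"
  shows "path_image (g (cs ! i) (cs ! j)) - {p (cs ! i), p (cs ! j)} \<subseteq> inside (cycle_image cs)"
proof -
  define P1 where "P1 = cycle_segment cs i (j - i)"
  define P2 where "P2 = cycle_segment cs j (length cs - (j - i))"
  note seg = cycle_segments[OF cyc ij, folded P1_def P2_def]
  note th = cycle_chord_theta_arcs[OF cyc ij chord, folded P1_def P2_def]
  let ?T1 = "path_image (walk_path p g P1)" and ?T2 = "path_image (walk_path p g (rev P2))"
    and ?Tc = "path_image (g (cs ! i) (cs ! j))"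
  have rev_P2: "successively E (rev P2)" "distinct (rev P2)" "length (rev P2) \<ge> 3"
    using successively_rev_adj[OF seg(6)] seg(7,8) by simp_all
  have "closed ?T1" "closed ?T2" "closed ?Tc"
    using th unfolding theta_arcs_def by (simp_all add: closed_arc_image)
  moreover have "?T1 \<subseteq> drawing_set V E p g" "?T2 \<subseteq> drawing_set V E p g" "?Tc \<subseteq> drawing_set V E p g"
    using walk_path_subset_drawing seg rev_P2 edge_image_subset_drawing[OF chord] by simp_all
  ultimately have "\<not> ?T1 - {p (cs ! i), p (cs ! j)} \<subseteq> inside (?T2 \<union> ?Tc)"
    "\<not> ?T2 - {p (cs ! i), p (cs ! j)} \<subseteq> inside (?T1 \<union> ?Tc)"
    using walk_path_interior_not_inside[OF seg(1-3), of "?T2 \<union> ?Tc"]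
      walk_path_interior_not_inside[OF rev_P2, of "?T1 \<union> ?Tc"] seg
    by (simp_all add: hd_rev last_rev closed_Un)
  then show ?thesis
    using theta_arc_inside_cycle[OF th] cycle_image_segments[OF cyc ij, folded P1_def P2_def]
      by auto
qed

lemma chords_not_crossing:
  assumes cyc: "is_cycle V E cs" and order: "i1 < i2" "i2 < i3" "i3 < i4" "i4 < length cs"
    and chord1: "E (cs ! i1) (cs ! i3)" and chord2: "E (cs ! i2) (cs ! i4)"
  shows False
proof -
  let ?a = "cs ! i1" and ?c = "cs ! i2" and ?b = "cs ! i3" and ?d = "cs ! i4"
  have ij: "i1 < i3" "i3 < length cs" "2 \<le> i3 - i1" "2 \<le> length cs - (i3 - i1)" using order by auto
  define P1 where "P1 = cycle_segment cs i1 (i3 - i1)"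
  define P2 where "P2 = cycle_segment cs i3 (length cs - (i3 - i1))"
  note seg = cycle_segments[OF cyc ij, folded P1_def P2_def]
  note th = cycle_chord_theta_arcs[OF cyc ij chord1, folded P1_def P2_def]
  let ?T1 = "path_image (walk_path p g P1)" and ?T2 = "path_image (walk_path p g (rev P2))"
    and ?Tc = "path_image (g ?a ?b)" and ?CD = "path_image (g ?c ?d) - {p ?c, p ?d}"
  have "distinct cs" using cyc unfolding is_cycle_def by blast
  then have neq: "?c \<noteq> ?a" "?c \<noteq> ?b" "?d \<noteq> ?a" "?d \<noteq> ?b"
    using order nth_eq_iff_index_eq by fastforce+
  have cd_V: "?c \<in> V" "?d \<in> V" using adj_in_vertices[OF chord2] by auto
  have rev_P2: "successively E (rev P2)" "length (rev P2) \<ge> 2"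
    using successively_rev_adj[OF seg(6)] seg(8) by simp_all
  have closed: "closed ?T1" "closed ?T2" "closed ?Tc"
    using th unfolding theta_arcs_def by (simp_all add: closed_arc_image)
  have drawn: "?T1 \<union> ?Tc \<subseteq> drawing_set V E p g" "?T2 \<union> ?Tc \<subseteq> drawing_set V E p g"
    using walk_path_subset_drawing seg rev_P2 edge_image_subset_drawing[OF chord1] by simp_all
  have cycle_image: "cycle_image cs = ?T1 \<union> ?T2"
    using cycle_image_segments[OF cyc ij, folded P1_def P2_def] by simp
  have "?Tc - {p ?a, p ?b} \<noteq> {}" "?Tc - {p ?a, p ?b} \<subseteq> inside (?T1 \<union> ?T2)"
    using theta_arcs_path_image(2)[OF theta_arcs_swap12[OF theta_arcs_swap23[OF th]]]
      chord_inside_cycle[OF cyc ij chord1] cycle_image by auto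
  then have "?Tc \<inter> inside (?T1 \<union> ?T2) \<noteq> {}" by blast
  moreover have "connected ?CD"
    using connected_simple_path_endless[OF arc_imp_simple_path, of "g ?c ?d"] edge_arc[OF chord2]
      by simp
  moreover have "?CD \<subseteq> inside (?T1 \<union> ?T2)"
    using chord_inside_cycle[OF cyc _ _ _ _ chord2] order cycle_image by simp
  moreover have "path_image (g ?c ?d) \<inter> ?Tc \<subseteq> p ` ({?c, ?d} \<inter> {?a, ?b})"
    using edge_images_Int[OF chord2 chord1] neq by (auto simp: doubleton_eq_iff)
  then have "?CD \<inter> ?Tc = {}" using neq by blast
  ultimately have "?CD \<subseteq> inside (?T1 \<union> ?Tc) \<or> ?CD \<subseteq> inside (?T2 \<union> ?Tc)"
    by (rule theta_split_inside[OF th])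
  then show False
  proof
    assume "?CD \<subseteq> inside (?T1 \<union> ?Tc)"
    moreover have "?d \<notin> set P1" using seg(11)[of i4] order by auto
    then have "p ?d \<notin> ?T1 \<union> ?Tc"
      using vertex_on_walk_path_iff[OF seg(1) _ cd_V(2)] seg(3)
        vertex_on_edge_image[OF chord1 cd_V(2)] neq
      by auto
    ultimately show False
      using edge_interior_not_inside[OF chord2 _ drawn(1)] closed by (simp add: closed_Un)
  next
    assume "?CD \<subseteq> inside (?T2 \<union> ?Tc)"
    moreover have "?c \<notin> set (rev P2)" using seg(12)[of i2] order by auto
    then have "p ?c \<notin> ?T2 \<union> ?Tc"
      using vertex_on_walk_path_iff[OF rev_P2 cd_V(1)] vertex_on_edge_image[OF chord1 cd_V(1)] neq
      by auto
    ultimately show False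
      using edge_interior_not_inside[OF adj_sym[OF chord2] _ drawn(2)] closed
        path_image_edge_sym[OF chord2]
      by (simp add: closed_Un insert_commute)
  qed
qed

end

section \<open>Induced subgraphs and homomorphisms to odd cycles\<close>

definition restrict_adj :: "('a \<Rightarrow> 'a \<Rightarrow> bool) \<Rightarrow> 'a set \<Rightarrow> 'a \<Rightarrow> 'a \<Rightarrow> bool" where
  "restrict_adj E W x y \<longleftrightarrow> E x y \<and> x \<in> W \<and> y \<in> W"

lemma outerplanar_restrict_adj:
  assumes "outerplanar V E" "W \<subseteq> V"
  shows "outerplanar W (restrict_adj E W)"
proof -
  obtain p g where sg: "simple_graph V E" and pd: "plane_drawing V E p g"
    and outer: "\<forall>v\<in>V. p v \<in> closure (outside (drawing_set V E p g))"
    using assms(1) unfolding outerplanar_def by blast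
  have "simple_graph W (restrict_adj E W)"
    using sg assms(2) unfolding simple_graph_def restrict_adj_def by (auto intro: finite_subset)
  moreover have "plane_drawing W (restrict_adj E W) p g"
    using pd assms(2) unfolding plane_drawing_def restrict_adj_def
    by (intro conjI; elim conjE) (auto intro: inj_on_subset)
  moreover have "drawing_set W (restrict_adj E W) p g \<subseteq> drawing_set V E p g"
    using assms(2) unfolding drawing_set_def restrict_adj_def by blast
  then have "\<forall>v\<in>W. p v \<in> closure (outside (drawing_set W (restrict_adj E W) p g))"
    using outer assms(2) closure_mono[OF outside_mono] by blast
  ultimately show ?thesis unfolding outerplanar_def by blast
qed

lemma rtranclp_restrict_adj_mem:
  assumes "(restrict_adj E W)\<^sup>*\<^sup>* w x" "w \<in> W"
  shows "x \<in> W"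
  using assms by (induction rule: rtranclp_induct) (auto simp: restrict_adj_def)

lemma girth_at_least_restrict_adj:
  assumes "girth_at_least V E n" "W \<subseteq> V"
  shows "girth_at_least W (restrict_adj E W) n"
  using assms unfolding girth_at_least_def is_cycle_def restrict_adj_def by blast

lemma cycle_graph_adj_sym: "cycle_graph_adj N x y \<Longrightarrow> cycle_graph_adj N y x"
  unfolding cycle_graph_adj_def by blast

lemma cycle_graph_adj_less: "cycle_graph_adj N x y \<Longrightarrow> x < N \<and> y < N"
  unfolding cycle_graph_adj_def by blast

lemma cycle_graph_adj_Suc_mod: "x < N \<Longrightarrow> cycle_graph_adj N ((x + 1) mod N) x"
  unfolding cycle_graph_adj_def by auto

lemma cycle_graph_adj_rotate:
  assumes "cycle_graph_adj N x y"
  shows "cycle_graph_adj N ((x + c) mod N) ((y + c) mod N)"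
proof -
  have "(b + c) mod N = ((a + c) mod N + 1) mod N" if "b = (a + 1) mod N" for a b
  proof -
    have "(b + c) mod N = (a + 1 + c) mod N" using that by (simp add: mod_add_left_eq)
    also have "\<dots> = ((a + c) mod N + 1) mod N" by (simp add: mod_Suc_eq)
    finally show ?thesis .
  qed
  then show ?thesis using assms unfolding cycle_graph_adj_def by auto
qed

text \<open>Walks in \<open>C\<^sub>2\<^sub>k\<^sub>+\<^sub>1\<close> are functions \<open>h\<close> on \<open>{0..L}\<close>. Going once around
  the cycle the long way gives a walk of length \<open>2k\<close> between adjacent vertices; back-and-forth steps
  pad it to any larger even length.\<close>
lemma cycle_graph_walk_long_way:
  assumes "N = 2 * k + 1" "x < N" "y = (x + 1) mod N" "even L" "L \<ge> 2 * k"
  shows "\<exists>h. h 0 = x \<and> h L = y \<and> (\<forall>t<L. cycle_graph_adj N (h t) (h (Suc t)))"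
proof -
  define s where "s = L - 2 * k"
  have "even s" using assms(4,5) unfolding s_def by simp
  define h where
    "h t = (if t < s then (if even t then x else y) else (x + N - (t - s)) mod N)" for t
  have yx: "cycle_graph_adj N y x" using cycle_graph_adj_Suc_mod[OF assms(2)] assms(3) by simp
  have xN: "(x + N) mod N = x" using assms(2) by simp
  then have "h 0 = x" unfolding h_def by simp
  moreover have "h L = (x + N - 2 * k) mod N" unfolding h_def s_def using assms(5) by simp
  then have "h L = y" using assms(1,3) by simp
  moreover have "cycle_graph_adj N (h t) (h (Suc t))" if t: "t < L" for t
  proof -
    consider "Suc t < s" | "Suc t = s" | "s \<le> t" by linarith
    then show ?thesis
    proof cases
      case 1
      then show ?thesis unfolding h_def using yx cycle_graph_adj_sym[OF yx] by auto
    next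
      case 2
      then have "odd t" using \<open>even s\<close> by auto
      then show ?thesis unfolding h_def using 2 yx xN by simp
    next
      case 3
      have "t - s < 2 * k" using t 3 assms(5) unfolding s_def by linarith
      then have "x + N - (t - s) = Suc (x + N - Suc (t - s))" using assms(1) by simp
      then have "h t = (h (Suc t) + 1) mod N"
        using 3 unfolding h_def by (simp add: Suc_diff_le mod_Suc_eq)
      moreover have "h (Suc t) < N" using 3 assms(1) unfolding h_def by simp
      ultimately show ?thesis using cycle_graph_adj_Suc_mod by simp
    qed
  qed
  ultimately show ?thesis by blast
qed

lemma cycle_graph_walk_exists:
  assumes "N = 2 * k + 1" "cycle_graph_adj N x y" "odd L \<or> L \<ge> 2 * k"
  shows "\<exists>h. h 0 = x \<and> h L = y \<and> (\<forall>t<L. cycle_graph_adj N (h t) (h (Suc t)))"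
proof (cases "odd L")
  case True
  have "cycle_graph_adj N (if even t then x else y) (if even (Suc t) then x else y)" for t
    using assms(2) cycle_graph_adj_sym by auto
  then show ?thesis using True by (intro exI[of _ "\<lambda>t. if even t then x else y"]) auto
next
  case False
  then have L: "even L" "L \<ge> 2 * k" using assms(3) by auto
  have xy: "x < N" "y < N" using cycle_graph_adj_less[OF assms(2)] by auto
  consider "y = (x + 1) mod N" | "x = (y + 1) mod N"
    using assms(2) unfolding cycle_graph_adj_def by blast
  then show ?thesis
  proof cases
    case 1
    then show ?thesis using cycle_graph_walk_long_way[OF assms(1) xy(1) _ L] by blast
  next
    case 2
    then obtain h where h: "h 0 = y" "h L = x" "\<forall>t<L. cycle_graph_adj N (h t) (h (Suc t))"
      using cycle_graph_walk_long_way[OF assms(1) xy(2) _ L] by blast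
    have "cycle_graph_adj N (h (L - t)) (h (L - Suc t))" if "t < L" for t
      using h(3)[rule_format, of "L - Suc t"] that cycle_graph_adj_sym by (simp add: Suc_diff_Suc)
    then show ?thesis using h(1,2) by (intro exI[of _ "\<lambda>t. h (L - t)"]) auto
  qed
qed

lemma graph_hom_extend_leaf:
  assumes sg: "simple_graph V E" and v: "v \<in> V" and leaf: "\<forall>u1 u2. E v u1 \<and> E v u2 \<longrightarrow> u1 = u2"
    and N: "N \<ge> 1"
    and f': "graph_hom (V - {v}) (restrict_adj E (V - {v})) {0..<N} (cycle_graph_adj N) f'"
  shows "\<exists>f. graph_hom V E {0..<N} (cycle_graph_adj N) f"
proof -
  have E: "\<And>a b. E a b \<Longrightarrow> a \<in> V \<and> b \<in> V \<and> a \<noteq> b \<and> E b a"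
    using sg unfolding simple_graph_def by blast
  have f'_hom: "cycle_graph_adj N (f' a) (f' b)" if "E a b" "a \<noteq> v" "b \<noteq> v" for a b
    using f' E[OF that(1)] that unfolding graph_hom_def restrict_adj_def by blast
  show ?thesis
  proof (cases "\<exists>u. E v u")
    case True
    then obtain u where u: "E v u" by blast
    define f where "f = f'(v := (f' u + 1) mod N)"
    have "f' u < N" "u \<noteq> v" using f' E[OF u] unfolding graph_hom_def by auto
    then have vu: "cycle_graph_adj N (f v) (f u)"
      using cycle_graph_adj_Suc_mod unfolding f_def by simp
    have "graph_hom V E {0..<N} (cycle_graph_adj N) f"
      unfolding graph_hom_def
    proof (intro conjI ballI allI impI)
      fix z assume "z \<in> V"
      then show "f z \<in> {0..<N}" using f' N unfolding graph_hom_def f_def by auto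
    next
      fix a b assume e: "E a b"
      consider "a = v" | "b = v" | "a \<noteq> v" "b \<noteq> v" by blast
      then show "cycle_graph_adj N (f a) (f b)"
      proof cases
        case 1
        then show ?thesis using vu leaf u e by blast
      next
        case 2
        then show ?thesis using vu leaf u E[OF e] cycle_graph_adj_sym by blast
      next
        case 3
        then show ?thesis using f'_hom[OF e] unfolding f_def by simp
      qed
    qed
    then show ?thesis by blast
  next
    case False
    then have "\<not> E a v" "\<not> E v a" for a using E by blast+
    then have "graph_hom V E {0..<N} (cycle_graph_adj N) (f'(v := 0))"
      using f' f'_hom N unfolding graph_hom_def by auto
    then show ?thesis by blast
  qed
qed

lemma graph_hom_glue_cycle_graph:
  assumes V: "V = X \<union> Y" and cut: "X \<inter> Y \<subseteq> {v}"
    and sep: "\<forall>x y. E x y \<longrightarrow> (x \<in> X \<and> y \<in> X) \<or> (x \<in> Y \<and> y \<in> Y)"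
    and f1: "graph_hom X (restrict_adj E X) {0..<N} (cycle_graph_adj N) f1"
    and f2: "graph_hom Y (restrict_adj E Y) {0..<N} (cycle_graph_adj N) f2"
  shows "\<exists>f. graph_hom V E {0..<N} (cycle_graph_adj N) f"
proof -
  define c where "c = N - f2 v + f1 v"
  define f where "f z = (if z \<in> X then f1 z else (f2 z + c) mod N)" for z
  have fY: "f z = (f2 z + c) mod N" if "z \<in> Y" for z
  proof (cases "z \<in> X")
    case True
    then have "z = v" "f1 v < N" "f2 v < N" using cut that f1 f2 unfolding graph_hom_def by auto
    then show ?thesis unfolding f_def c_def by simp
  qed (simp add: f_def)
  have "graph_hom V E {0..<N} (cycle_graph_adj N) f"
    unfolding graph_hom_def
  proof (intro conjI ballI allI impI)
    fix x assume "x \<in> V"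
    then show "f x \<in> {0..<N}" using f1 f2 unfolding f_def graph_hom_def V by fastforce
  next
    fix a b assume e: "E a b"
    show "cycle_graph_adj N (f a) (f b)"
    proof (cases "a \<in> X \<and> b \<in> X")
      case True
      then show ?thesis using f1 e unfolding graph_hom_def restrict_adj_def f_def by auto
    next
      case False
      then have "a \<in> Y" "b \<in> Y" using sep e by blast+
      then show ?thesis
        using f2 e cycle_graph_adj_rotate fY unfolding graph_hom_def restrict_adj_def by metis
    qed
  qed
  then show ?thesis by blast
qed

lemma graph_hom_extend_along_path:
  assumes sg: "simple_graph V E"
    and P: "distinct P" "set P \<subseteq> V" "length P = Suc L"
    and deg: "\<forall>t. 0 < t \<and> t < L \<longrightarrow> (\<forall>y. E (P ! t) y \<longrightarrow> y = P ! (t - 1) \<or> y = P ! Suc t)"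
    and I: "I = {P ! t | t. 0 < t \<and> t < L}"
    and f': "graph_hom (V - I) (restrict_adj E (V - I)) W F f'"
    and h: "h 0 = f' (P ! 0)" "h L = f' (P ! L)" "\<forall>t<L. F (h t) (h (Suc t))" "\<forall>t\<le>L. h t \<in> W"
    and F: "symp F"
  shows "\<exists>f. graph_hom V E W F f"
proof -
  have E: "\<And>a b. E a b \<Longrightarrow> a \<in> V \<and> b \<in> V \<and> E b a"
    using sg unfolding simple_graph_def by blast
  have inj: "inj_on ((!) P) {..L}"
    using P(1,3) nth_eq_iff_index_eq by (fastforce simp: inj_on_def)
  define f where "f z = (if z \<in> I then h (the_inv_into {..L} ((!) P) z) else f' z)" for z
  have f_interior: "f (P ! t) = h t" if "0 < t" "t < L" for t
    using that the_inv_into_f_f[OF inj] unfolding f_def I by auto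
  have I_iff: "P ! t \<in> I \<longleftrightarrow> 0 < t \<and> t < L" if "t \<le> L" for t
    using that P(1,3) nth_eq_iff_index_eq unfolding I by fastforce
  have f_P: "f (P ! t) = h t" if "t \<le> L" for t
    using that f_interior h(1,2) I_iff unfolding f_def by (cases "0 < t \<and> t < L") auto
  have interior_edge: "F (f x) (f y)" if e: "E x y" and x: "x \<in> I" for x y
  proof -
    obtain t where t: "x = P ! t" "0 < t" "t < L" using x unfolding I by blast
    then consider "y = P ! (t - 1)" | "y = P ! Suc t" using deg e by blast
    then show ?thesis
    proof cases
      case 1
      then show ?thesis
        using h(3)[rule_format, of "t - 1"] t f_P[of t] f_P[of "t - 1"] F by (simp add: symp_def)
    next
      case 2
      then show ?thesis using h(3) t f_P[of t] f_P[of "Suc t"] by simp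
    qed
  qed
  have "graph_hom V E W F f"
    unfolding graph_hom_def
  proof (intro conjI ballI allI impI)
    fix z assume "z \<in> V"
    show "f z \<in> W"
    proof (cases "z \<in> I")
      case True
      then obtain t where "z = P ! t" "0 < t" "t < L" unfolding I by blast
      then show ?thesis using f_interior h(4) by simp
    next
      case False
      then show ?thesis using f' \<open>z \<in> V\<close> unfolding graph_hom_def f_def by auto
    qed
  next
    fix x y assume e: "E x y"
    show "F (f x) (f y)"
    proof (cases "x \<in> I \<or> y \<in> I")
      case True
      then show ?thesis using interior_edge e E F by (meson sympD)
    next
      case False
      then show ?thesis using f' e E unfolding graph_hom_def restrict_adj_def f_def by auto
    qed
  qed
  then show ?thesis by blast
qed

section \<open>Longest cycles and ears\<close>

lemma rtranclp_imp_distinct_path: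
  assumes "R\<^sup>*\<^sup>* x y"
  shows "\<exists>xs. xs \<noteq> [] \<and> hd xs = x \<and> last xs = y \<and> distinct xs \<and> successively R xs
    \<and> set xs \<subseteq> {z. R\<^sup>*\<^sup>* x z}"
  using assms
proof (induction rule: rtranclp_induct)
  case base
  then show ?case by (intro exI[of _ "[x]"]) simp
next
  case (step y z)
  then obtain xs where xs: "xs \<noteq> []" "hd xs = x" "last xs = y" "distinct xs" "successively R xs"
    "set xs \<subseteq> {z. R\<^sup>*\<^sup>* x z}" by blast
  show ?case
  proof (cases "z \<in> set xs")
    case True
    then obtain i where i: "i < length xs" "xs ! i = z" by (metis in_set_conv_nth)
    then have "last (take (Suc i) xs) = z" by (simp add: take_Suc_conv_app_nth)
    moreover have "take (Suc i) xs \<noteq> []" "hd (take (Suc i) xs) = x" "distinct (take (Suc i) xs)"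
      using xs by auto
    moreover have "set (take (Suc i) xs) \<subseteq> {z. R\<^sup>*\<^sup>* x z}"
      using xs(6) set_take_subset[of "Suc i" xs] by blast
    ultimately show ?thesis using successively_take[OF xs(5)] by blast
  next
    case False
    then show ?thesis
      using xs step by (intro exI[of _ "xs @ [z]"]) (auto simp: successively_append_iff)
  qed
qed

lemma distinct_length_le_card: "finite V \<Longrightarrow> distinct xs \<Longrightarrow> set xs \<subseteq> V \<Longrightarrow> length xs \<le> card V"
  by (metis card_mono distinct_card)

lemma exists_cycle_if_min_degree_two:
  assumes sg: "simple_graph V E" and "V \<noteq> {}"
    and deg: "\<forall>v\<in>V. \<exists>u1 u2. E v u1 \<and> E v u2 \<and> u1 \<noteq> u2"
  shows "\<exists>cs. is_cycle V E cs"
proof -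
  have fin: "finite V" and E: "\<And>a b. E a b \<Longrightarrow> a \<in> V \<and> b \<in> V \<and> a \<noteq> b \<and> E b a"
    using sg unfolding simple_graph_def by blast+
  define Q where "Q xs \<longleftrightarrow> xs \<noteq> [] \<and> distinct xs \<and> set xs \<subseteq> V \<and> successively E xs" for xs
  obtain v where "v \<in> V" using assms(2) by blast
  then have "Q [v]" unfolding Q_def by simp
  moreover have "\<forall>xs. Q xs \<longrightarrow> length xs < card V + 1"
    using distinct_length_le_card[OF fin] unfolding Q_def by (simp add: less_Suc_eq_le)
  ultimately obtain xs where xs: "Q xs" and longest: "\<forall>ys. Q ys \<longrightarrow> length ys \<le> length xs"
    using ex_has_greatest_nat[of Q "[v]" length "card V + 1"] by blast
  then have xs_ne: "xs \<noteq> []" and dxs: "distinct xs" and sxs: "set xs \<subseteq> V"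
    and wxs: "successively E xs"
    unfolding Q_def by auto
  text \<open>A longest path cannot be extended at its start, so all neighbours of its first vertex
    lie on it.\<close>
  have on_path: "u \<in> set xs" if "E (hd xs) u" for u
  proof (rule ccontr)
    assume "u \<notin> set xs"
    then have "Q (u # xs)"
      using xs_ne dxs sxs wxs E[OF that] unfolding Q_def by (cases xs) auto
    then show False using longest by fastforce
  qed
  obtain u1 u2 where u: "E (hd xs) u1" "E (hd xs) u2" "u1 \<noteq> u2"
    using deg sxs xs_ne by (meson hd_in_set subsetD)
  obtain j1 j2 where j: "j1 < length xs" "xs ! j1 = u1" "j2 < length xs" "xs ! j2 = u2"
    using on_path[OF u(1)] on_path[OF u(2)] by (metis in_set_conv_nth)
  have "j1 \<noteq> 0" "j2 \<noteq> 0" using j u E xs_ne by (metis hd_conv_nth)+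
  then obtain j where j: "2 \<le> j" "j < length xs" "E (hd xs) (xs ! j)"
    using j u by (metis One_nat_def less_2_cases not_le)
  have "last (take (Suc j) xs) = xs ! j" using j(2) by (simp add: take_Suc_conv_app_nth)
  moreover have "hd (take (Suc j) xs) = hd xs" "length (take (Suc j) xs) \<ge> 3" using j xs_ne by auto
  moreover have "set (take (Suc j) xs) \<subseteq> V" using sxs set_take_subset[of "Suc j" xs] by blast
  ultimately have "is_cycle V E (take (Suc j) xs)"
    unfolding is_cycle_iff_successively using dxs successively_take[OF wxs] E[OF j(3)] by simp
  then show ?thesis by blast
qed

lemma exists_longest_cycle:
  assumes "simple_graph V E" "is_cycle V E cs0"
  obtains cs where "is_cycle V E cs" "\<forall>cs'. is_cycle V E cs' \<longrightarrow> length cs' \<le> length cs"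
proof -
  have "finite V" using assms(1) unfolding simple_graph_def by blast
  then have "length cs < card V + 1" if "is_cycle V E cs" for cs
    using that distinct_length_le_card[of V cs] unfolding is_cycle_def by simp
  then show ?thesis
    using ex_has_greatest_nat[of "is_cycle V E" cs0 length, OF assms(2)] that by blast
qed

lemma is_cycle_replace_edge:
  assumes cyc: "is_cycle V E cs" and x: "x < length cs" and y: "y = (x + 1) mod length cs"
    and M: "M \<noteq> []" "distinct M" "set M \<inter> set cs = {}" "set M \<subseteq> V"
    and path: "successively E (cs ! x # M @ [cs ! y])"
  shows "is_cycle V E (cycle_segment cs y (length cs - 1) @ M)"
proof -
  let ?n = "length cs" and ?C = "cycle_segment cs y (length cs - 1)"
  have n: "?n \<ge> 3" "distinct cs" "set cs \<subseteq> V" using cyc unfolding is_cycle_def by auto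
  have "(y + (?n - 1)) mod ?n = x"
  proof -
    have "(y + (?n - 1)) mod ?n = (x + 1 + (?n - 1)) mod ?n" using y by (simp add: mod_add_left_eq)
    also have "x + 1 + (?n - 1) = x + ?n" using n by simp
    finally show ?thesis using x by simp
  qed
  then have ends: "hd ?C = cs ! y" "last ?C = cs ! x"
    using x y by (auto simp: hd_cycle_segment last_cycle_segment)
  have "cs \<noteq> []" using n by auto
  then have C: "set ?C \<subseteq> set cs" "distinct ?C" "length ?C = ?n" "?C \<noteq> []"
    using n set_cycle_segment_subset[of cs] distinct_cycle_segment[of cs]
      length_greater_0_conv[of ?C]
    by simp_all
  have "successively E (M @ [cs ! y])" "E (cs ! x) (hd M)"
    using path M(1) by (simp_all add: successively_Cons)
  then have M_path: "successively E M" "E (cs ! x) (hd M)" "E (last M) (cs ! y)"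
    using M(1) by (auto simp: successively_append_iff)
  show ?thesis
    unfolding is_cycle_iff_successively
  proof (intro conjI)
    show "3 \<le> length (?C @ M)" using n C by simp
    show "distinct (?C @ M)" using C M by auto
    show "set (?C @ M) \<subseteq> V" using C n M by auto
    show "successively E (?C @ M)"
      using C M_path ends M(1) successively_cycle_segment[OF cyc]
        by (simp add: successively_append_iff)
    show "E (last (?C @ M)) (hd (?C @ M))" using M_path ends M(1) C by simp
  qed
qed

definition cycle_chord :: "('a \<Rightarrow> 'a \<Rightarrow> bool) \<Rightarrow> 'a list \<Rightarrow> nat \<Rightarrow> nat \<Rightarrow> bool" where
  "cycle_chord E cs i j \<longleftrightarrow>
     i < j \<and> j < length cs \<and> 2 \<le> j - i \<and> 2 \<le> length cs - (j - i) \<and> E (cs ! i) (cs ! j)"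

definition is_ear :: "'a set \<Rightarrow> ('a \<Rightarrow> 'a \<Rightarrow> bool) \<Rightarrow> 'a list \<Rightarrow> bool" where
  "is_ear V E P \<longleftrightarrow> is_cycle V E P \<and>
     (\<forall>t. 0 < t \<and> t < length P - 1 \<longrightarrow> (\<forall>y. E (P ! t) y \<longrightarrow> y = P ! (t - 1) \<or> y = P ! Suc t))"

context outerplane_drawing
begin

lemma longest_cycle_no_bridge_ordered:
  assumes cyc: "is_cycle V E cs" and longest: "\<forall>cs'. is_cycle V E cs' \<longrightarrow> length cs' \<le> length cs"
    and ij: "i < j" "j < length cs"
    and M: "M \<noteq> []" "distinct M" "set M \<inter> set cs = {}" "set M \<subseteq> V"
    and path: "successively E (cs ! i # M @ [cs ! j])"
  shows False
proof -
  let ?n = "length cs"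
  have n: "?n \<ge> 3" "distinct cs" using cyc unfolding is_cycle_def by auto
  have longer: "\<not> is_cycle V E (cycle_segment cs y (?n - 1) @ M')" if "M' \<noteq> []" for y M'
  proof
    assume "is_cycle V E (cycle_segment cs y (?n - 1) @ M')"
    then have "length (cycle_segment cs y (?n - 1) @ M') \<le> ?n" using longest by blast
    then show False using that n(1) by simp
  qed
  consider "j = i + 1" | "i = 0" "j = ?n - 1" | "2 \<le> j - i" "2 \<le> ?n - (j - i)" using ij by linarith
  then show False
  proof cases
    case 1
    then show False using is_cycle_replace_edge[OF cyc _ _ M path] longer[OF M(1)] ij by simp
  next
    case 2
    have "rev (cs ! i # M @ [cs ! j]) = cs ! j # rev M @ [cs ! i]" by simp
    then have rev_path: "successively E (cs ! j # rev M @ [cs ! i])"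
      using successively_rev_adj[OF path] by metis
    have "j + 1 = ?n" using 2 n by simp
    then have "i = (j + 1) mod ?n" using 2 by simp
    moreover have "rev M \<noteq> []" "distinct (rev M)" "set (rev M) \<inter> set cs = {}" "set (rev M) \<subseteq> V"
      using M by auto
    ultimately show False using is_cycle_replace_edge[OF cyc ij(2)] rev_path longer by blast
  next
    case 3
    define P1 where "P1 = cycle_segment cs i (j - i)"
    define P2 where "P2 = cycle_segment cs j (?n - (j - i))"
    note seg = cycle_segments[OF cyc ij 3, folded P1_def P2_def]
    let ?Z = "cs ! i # M @ [cs ! j]"
    have "cs \<noteq> []" using n by auto
    then have "set P1 \<subseteq> set cs" "set P2 \<subseteq> set cs"
      unfolding P1_def P2_def by (simp_all add: set_cycle_segment_subset)
    moreover have "cs ! i \<in> set P1 \<inter> set P2" "cs ! j \<in> set P1 \<inter> set P2" using seg(13) by auto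
    moreover have ab: "cs ! i \<noteq> cs ! j" "cs ! i \<notin> set M" "cs ! j \<notin> set M"
      using ij n(2) M(3) nth_eq_iff_index_eq by fastforce+
    ultimately have "set P1 \<inter> set ?Z = {cs ! i, cs ! j}" "set (rev P2) \<inter> set ?Z = {cs ! i, cs ! j}"
      using M(3) by auto
    moreover have "distinct ?Z" "length ?Z \<ge> 3" using M(1,2) ab by (auto simp: Suc_le_eq)
    moreover have "successively E (rev P2)" "distinct (rev P2)" "length (rev P2) \<ge> 3"
      "hd (rev P2) = cs ! i" "last (rev P2) = cs ! j"
      using successively_rev_adj[OF seg(6)] seg(7-10) by (simp_all add: hd_rev last_rev)
    ultimately show False
      using no_theta_subgraph[OF ab(1) seg(1-5), of "rev P2" ?Z] seg(13) path by simp
  qed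
qed

text \<open>A path outside a longest cycle joining two of its vertices gives either a longer cycle
  or, together with the two arcs of the cycle, a theta subgraph.\<close>
lemma longest_cycle_no_bridge:
  assumes cyc: "is_cycle V E cs" and longest: "\<forall>cs'. is_cycle V E cs' \<longrightarrow> length cs' \<le> length cs"
    and u: "u \<in> set cs" "u' \<in> set cs" "u \<noteq> u'"
    and M: "M \<noteq> []" "distinct M" "set M \<inter> set cs = {}" "set M \<subseteq> V"
    and path: "successively E (u # M @ [u'])"
  shows False
proof -
  obtain i j where ij: "i < length cs" "cs ! i = u" "j < length cs" "cs ! j = u'"
    using u(1,2) by (metis in_set_conv_nth)
  consider "i < j" | "j < i" using ij u(3) by (metis linorder_neqE_nat)
  then show False
  proof cases
    case 1
    then show False
      using longest_cycle_no_bridge_ordered[OF cyc longest 1 ij(3) M] ij(2,4) path by simp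
  next
    case 2
    have "rev (u # M @ [u']) = u' # rev M @ [u]" by simp
    then have "successively E (u' # rev M @ [u])" using successively_rev_adj[OF path] by metis
    then show False
      using longest_cycle_no_bridge_ordered[OF cyc longest 2 ij(1), of "rev M"] ij M by simp
  qed
qed

lemma longest_cycle_component_attachment:
  assumes cyc: "is_cycle V E cs" and longest: "\<forall>cs'. is_cycle V E cs' \<longrightarrow> length cs' \<le> length cs"
    and w: "w \<in> V - set cs"
  defines "K \<equiv> {x. (restrict_adj E (V - set cs))\<^sup>*\<^sup>* w x}"
  shows "\<exists>v \<in> set cs. \<forall>x\<in>K. \<forall>c\<in>set cs. E x c \<longrightarrow> c = v"
proof (rule ccontr)
  let ?R = "restrict_adj E (V - set cs)"
  assume none: "\<not> ?thesis"
  moreover have "cs \<noteq> []" using cyc unfolding is_cycle_def by auto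
  then have "hd cs \<in> set cs" by simp
  ultimately obtain x1 c1 where x1: "x1 \<in> K" "c1 \<in> set cs" "E x1 c1" "c1 \<noteq> hd cs" by blast
  then obtain x2 c2 where x2: "x2 \<in> K" "c2 \<in> set cs" "E x2 c2" "c2 \<noteq> c1" using none by blast
  have "symp ?R" unfolding symp_def restrict_adj_def using adj_sym by blast
  then have "symp ?R\<^sup>*\<^sup>*" by (rule symp_rtranclp)
  then have "?R\<^sup>*\<^sup>* x1 w" using x1(1) unfolding K_def by (simp add: sympD)
  then have "?R\<^sup>*\<^sup>* x1 x2" using x2(1) unfolding K_def by simp
  then obtain xs where xs: "xs \<noteq> []" "hd xs = x1" "last xs = x2" "distinct xs" "successively ?R xs"
    "set xs \<subseteq> {z. ?R\<^sup>*\<^sup>* x1 z}"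
    using rtranclp_imp_distinct_path by metis
  have "set xs \<subseteq> K" using xs(6) x1(1) unfolding K_def by auto
  moreover have "K \<subseteq> V - set cs"
    using rtranclp_restrict_adj_mem[of E "V - set cs" w] w unfolding K_def by blast
  ultimately have "set xs \<subseteq> V - set cs" by blast
  moreover have "successively E (c1 # xs @ [c2])"
    using xs successively_mono[OF xs(5)] adj_sym[OF x1(3)] x2(3)
    by (auto simp: restrict_adj_def successively_append_iff successively_Cons)
  ultimately show False
    using longest_cycle_no_bridge[OF cyc longest x1(2) x2(2) x2(4)[symmetric] xs(1,4)] by blast
qed

text \<open>The component of \<open>w\<close> in the graph minus a longest cycle is separated from the rest of the
  graph by its only attachment vertex on the cycle.\<close>
lemma longest_cycle_separation:
  assumes cyc: "is_cycle V E cs" and longest: "\<forall>cs'. is_cycle V E cs' \<longrightarrow> length cs' \<le> length cs"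
    and w: "w \<in> V" "w \<notin> set cs"
  obtains X Y v where "V = X \<union> Y" "X \<inter> Y \<subseteq> {v}" "\<forall>x y. E x y \<longrightarrow> (x \<in> X \<and> y \<in> X) \<or> (x \<in> Y \<and> y \<in> Y)"
    "X \<subset> V" "Y \<subset> V"
proof -
  define K where "K = {x. (restrict_adj E (V - set cs))\<^sup>*\<^sup>* w x}"
  have cs: "length cs \<ge> 3" "distinct cs" "set cs \<subseteq> V" using cyc unfolding is_cycle_def by auto
  have K_off: "K \<subseteq> V - set cs"
    using rtranclp_restrict_adj_mem[of E "V - set cs" w] w unfolding K_def by blast
  obtain v where v: "v \<in> set cs" "\<forall>x\<in>K. \<forall>c\<in>set cs. E x c \<longrightarrow> c = v"
    using longest_cycle_component_attachment[OF cyc longest] w unfolding K_def by blast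
  have K_edge: "y \<in> K \<union> {v}" if "x \<in> K" "E x y" for x y
  proof (cases "y \<in> set cs")
    case False
    then have "restrict_adj E (V - set cs) x y"
      using that K_off adj_in_vertices unfolding restrict_adj_def by blast
    then show ?thesis using that(1) unfolding K_def by (simp add: rtranclp.rtrancl_into_rtrancl)
  qed (use that v(2) in blast)
  show ?thesis
  proof
    show "V = (K \<union> {v}) \<union> (V - K)" using v(1) cs(3) K_off by blast
    show "(K \<union> {v}) \<inter> (V - K) \<subseteq> {v}" by blast
    show "\<forall>x y. E x y \<longrightarrow> (x \<in> K \<union> {v} \<and> y \<in> K \<union> {v}) \<or> (x \<in> V - K \<and> y \<in> V - K)"
    proof (intro allI impI)
      fix x y assume e: "E x y"
      then show "(x \<in> K \<union> {v} \<and> y \<in> K \<union> {v}) \<or> (x \<in> V - K \<and> y \<in> V - K)"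
        using K_edge[OF _ e] K_edge[OF _ adj_sym[OF e]] adj_in_vertices[OF e] by blast
    qed
    have "0 < length cs" "1 < length cs" using cs(1) by auto
    then have "cs ! 0 \<noteq> cs ! 1" "cs ! 0 \<in> set cs" "cs ! 1 \<in> set cs"
      using nth_eq_iff_index_eq[OF cs(2)] by auto
    then obtain c where "c \<in> set cs" "c \<noteq> v" by metis
    then show "K \<union> {v} \<subset> V" using K_off cs(3) v(1) by blast
    show "V - K \<subset> V" using w unfolding K_def by blast
  qed
qed

lemma hamiltonian_cycle_neighbour:
  assumes cyc: "is_cycle V E cs" and ham: "V = set cs"
    and l: "0 < l" "l < length cs - 1" and e: "E (cs ! l) y"
  obtains m where "m < length cs" "y = cs ! m"
    "m = l - 1 \<or> m = l + 1 \<or> cycle_chord E cs (min l m) (max l m)"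
proof -
  obtain m where m: "m < length cs" "y = cs ! m"
    using adj_in_vertices[OF e] ham by (metis in_set_conv_nth)
  have "m \<noteq> l" using adj_irrefl e m by auto
  then have "m = l - 1 \<or> m = l + 1 \<or> cycle_chord E cs (min l m) (max l m)"
    using l m e adj_sym unfolding cycle_chord_def by (cases "m < l") auto
  then show ?thesis using that m by blast
qed

lemma shortest_chord_spans_no_chord:
  assumes cyc: "is_cycle V E cs" and ij: "cycle_chord E cs i j"
    and shortest: "\<And>i' j'. cycle_chord E cs i' j' \<Longrightarrow> j - i \<le> j' - i'"
    and l: "i < l" "l < j" and m: "m < length cs"
  shows "\<not> cycle_chord E cs (min l m) (max l m)"
proof
  assume chord: "cycle_chord E cs (min l m) (max l m)"
  have ij': "j < length cs" "E (cs ! i) (cs ! j)" using ij unfolding cycle_chord_def by auto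
  consider "m < i" | "i \<le> m" "m \<le> j" | "j < m" by linarith
  then show False
  proof cases
    case 1
    then show False
      using chords_not_crossing[OF cyc 1 l ij'(1)] chord ij' l unfolding cycle_chord_def
      by (auto simp: min_def max_def)
  next
    case 2
    then show False using shortest[OF chord] l by (auto simp: min_def max_def split: if_splits)
  next
    case 3
    then show False
      using chords_not_crossing[OF cyc l 3 m] chord ij' l unfolding cycle_chord_def
      by (auto simp: min_def max_def)
  qed
qed

lemma hamiltonian_cycle_has_ear:
  assumes cyc: "is_cycle V E cs" and ham: "V = set cs"
  shows "\<exists>P. is_ear V E P"
proof (cases "\<exists>i j. cycle_chord E cs i j")
  case False
  have "y = cs ! (l - 1) \<or> y = cs ! Suc l" if "0 < l" "l < length cs - 1" "E (cs ! l) y" for l y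
    using hamiltonian_cycle_neighbour[OF cyc ham that] False by fastforce
  then have "is_ear V E cs" unfolding is_ear_def using cyc by blast
  then show ?thesis by blast
next
  case True
  then obtain i j where ij: "cycle_chord E cs i j"
    and shortest: "\<And>i' j'. cycle_chord E cs i' j' \<Longrightarrow> j - i \<le> j' - i'"
    using ex_has_least_nat[of "\<lambda>(i, j). cycle_chord E cs i j" _ "\<lambda>(i, j). j - i"] by fast
  have ij': "i < j" "j < length cs" "2 \<le> j - i" "2 \<le> length cs - (j - i)" "E (cs ! i) (cs ! j)"
    using ij unfolding cycle_chord_def by auto
  define P where "P = cycle_segment cs i (j - i)"
  note seg = cycle_segments[OF cyc ij'(1-4), folded P_def]
  have P_nth: "P ! t = cs ! (i + t)" if "t \<le> j - i" for t
    using that ij' unfolding P_def by (simp add: nth_cycle_segment)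
  have "set P \<subseteq> V" using ham seg(1,3) walk_subset_vertices by simp
  then have "is_cycle V E P"
    unfolding is_cycle_iff_successively using seg(1-5) adj_sym[OF ij'(5)] by simp
  moreover have "y = P ! (t - 1) \<or> y = P ! Suc t"
    if t: "0 < t" "t < length P - 1" and e: "E (P ! t) y" for t y
  proof -
    have l: "0 < i + t" "i + t < length cs - 1" "i < i + t" "i + t < j"
      using t ij' unfolding P_def by auto
    obtain m where m: "m < length cs" "y = cs ! m"
      and "m = i + t - 1 \<or> m = i + t + 1 \<or> cycle_chord E cs (min (i + t) m) (max (i + t) m)"
      using hamiltonian_cycle_neighbour[OF cyc ham l(1,2)] e P_nth[of t] t unfolding P_def by auto
    then have "m = i + t - 1 \<or> m = i + t + 1"
      using shortest_chord_spans_no_chord[OF cyc ij shortest l(3,4) m(1)] by blast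
    then show ?thesis using m P_nth[of "t - 1"] P_nth[of "Suc t"] t unfolding P_def by auto
  qed
  ultimately show ?thesis unfolding is_ear_def by blast
qed

end

lemma graph_hom_cycle_graph_extend_ear:
  assumes sg: "simple_graph V E" and N: "N = 2 * k + 1"
    and ear: "is_ear V E P" and long: "length P \<ge> 2 * k"
    and I: "I = {P ! t | t. 0 < t \<and> t < length P - 1}"
    and f': "graph_hom (V - I) (restrict_adj E (V - I)) {0..<N} (cycle_graph_adj N) f'"
  shows "\<exists>f. graph_hom V E {0..<N} (cycle_graph_adj N) f"
proof -
  define L where "L = length P - 1"
  have P: "length P \<ge> 3" "distinct P" "set P \<subseteq> V" "E (last P) (hd P)"
    using ear unfolding is_ear_def is_cycle_iff_successively by auto
  then have "P \<noteq> []" by auto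
  then have L: "length P = Suc L" "P ! 0 = hd P" "P ! L = last P"
    unfolding L_def by (simp_all add: hd_conv_nth last_conv_nth)
  have "P ! 0 \<notin> I" "P ! L \<notin> I"
    using L(1) nth_eq_iff_index_eq[OF P(2)] unfolding I by fastforce+
  moreover have "P ! 0 \<in> V" "P ! L \<in> V" using P(3) L(1) nth_mem[of 0 P] nth_mem[of L P] by auto
  ultimately have ends: "P ! 0 \<in> V - I" "P ! L \<in> V - I" by simp_all
  then have "restrict_adj E (V - I) (P ! L) (P ! 0)"
    using P(4) L(2,3) unfolding restrict_adj_def by simp
  then have "cycle_graph_adj N (f' (P ! 0)) (f' (P ! L))"
    using f' cycle_graph_adj_sym unfolding graph_hom_def by blast
  moreover have "odd L \<or> L \<ge> 2 * k" using long L(1) by presburger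
  ultimately obtain h where h: "h 0 = f' (P ! 0)" "h L = f' (P ! L)"
    "\<forall>t<L. cycle_graph_adj N (h t) (h (Suc t))"
    using cycle_graph_walk_exists[OF N] by blast
  have "h t \<in> {0..<N}" if "t \<le> L" for t
  proof (cases "t < L")
    case True
    then show ?thesis using h(3) cycle_graph_adj_less by auto
  next
    case False
    then show ?thesis using that h(2) f' ends(2) unfolding graph_hom_def by simp
  qed
  moreover have "symp (cycle_graph_adj N)" using cycle_graph_adj_sym by (blast intro: sympI)
  ultimately show ?thesis
    using graph_hom_extend_along_path[OF sg P(2,3) L(1) _ I[folded L_def] f' h] ear
    unfolding is_ear_def L_def by blast
qed

lemma (in outerplane_drawing) graph_hom_cycle_graph_longest_cycle_step:
  assumes girth: "girth_at_least V E (2 * k)"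
    and smaller: "\<And>W. W \<subset> V \<Longrightarrow>
      \<exists>f. graph_hom W (restrict_adj E W) {0..<2 * k + 1} (cycle_graph_adj (2 * k + 1)) f"
    and cyc: "is_cycle V E cs" and longest: "\<forall>cs'. is_cycle V E cs' \<longrightarrow> length cs' \<le> length cs"
  shows "\<exists>f. graph_hom V E {0..<2 * k + 1} (cycle_graph_adj (2 * k + 1)) f"
proof (cases "set cs = V")
  case False
  then obtain w where "w \<in> V" "w \<notin> set cs" using cyc unfolding is_cycle_def by blast
  then obtain X Y v where XY: "V = X \<union> Y" "X \<inter> Y \<subseteq> {v}"
    "\<forall>x y. E x y \<longrightarrow> (x \<in> X \<and> y \<in> X) \<or> (x \<in> Y \<and> y \<in> Y)" "X \<subset> V" "Y \<subset> V"
    using longest_cycle_separation[OF cyc longest] by blast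
  obtain f1 f2
    where "graph_hom X (restrict_adj E X) {0..<2 * k + 1} (cycle_graph_adj (2 * k + 1)) f1"
    "graph_hom Y (restrict_adj E Y) {0..<2 * k + 1} (cycle_graph_adj (2 * k + 1)) f2"
    using smaller[OF XY(4)] smaller[OF XY(5)] by blast
  then show ?thesis using graph_hom_glue_cycle_graph[OF XY(1-3)] by blast
next
  case True
  then obtain P where ear: "is_ear V E P" using hamiltonian_cycle_has_ear[OF cyc] by blast
  define I where "I = {P ! t | t. 0 < t \<and> t < length P - 1}"
  have "length P \<ge> 3" "set P \<subseteq> V" using ear unfolding is_ear_def is_cycle_def by auto
  then have "P ! 1 \<in> I" "P ! 1 \<in> V" unfolding I_def by (force simp: nth_mem)+
  then obtain f'
    where "graph_hom (V - I) (restrict_adj E (V - I)) {0..<2 * k + 1}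
      (cycle_graph_adj (2 * k + 1)) f'"
    using smaller[of "V - I"] by blast
  moreover have "length P \<ge> 2 * k" using girth ear unfolding girth_at_least_def is_ear_def by blast
  ultimately show ?thesis
    using graph_hom_cycle_graph_extend_ear[OF simple refl ear _ I_def] by blast
qed

lemma outerplanar_graph_hom_cycle_graph_step:
  assumes outer: "outerplanar V E" and girth: "girth_at_least V E (2 * k)"
    and smaller: "\<And>W. W \<subset> V \<Longrightarrow>
      \<exists>f. graph_hom W (restrict_adj E W) {0..<2 * k + 1} (cycle_graph_adj (2 * k + 1)) f"
  shows "\<exists>f. graph_hom V E {0..<2 * k + 1} (cycle_graph_adj (2 * k + 1)) f"
proof -
  obtain p g where od: "outerplane_drawing V E p g"
    using outer outerplanar_iff_outerplane_drawing by blast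
  have sg: "simple_graph V E" using outer unfolding outerplanar_def by blast
  show ?thesis
  proof (cases "\<exists>v\<in>V. \<forall>u1 u2. E v u1 \<and> E v u2 \<longrightarrow> u1 = u2")
    case True
    then obtain v where v: "v \<in> V" "\<forall>u1 u2. E v u1 \<and> E v u2 \<longrightarrow> u1 = u2" by blast
    then have "V - {v} \<subset> V" by blast
    then obtain f' where
      "graph_hom (V - {v}) (restrict_adj E (V - {v})) {0..<2 * k + 1}
        (cycle_graph_adj (2 * k + 1)) f'"
      using smaller by blast
    then show ?thesis using graph_hom_extend_leaf[OF sg v] by simp
  next
    case False
    then have min_degree: "\<forall>v\<in>V. \<exists>u1 u2. E v u1 \<and> E v u2 \<and> u1 \<noteq> u2" by blast
    show ?thesis
    proof (cases "V = {}")
      case True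
      then have "graph_hom V E {0..<2 * k + 1} (cycle_graph_adj (2 * k + 1)) (\<lambda>_. 0)"
        using sg unfolding graph_hom_def simple_graph_def by blast
      then show ?thesis by blast
    next
      case False
      obtain cs0 where "is_cycle V E cs0"
        using exists_cycle_if_min_degree_two[OF sg False min_degree] by blast
      then obtain cs where "is_cycle V E cs" "\<forall>cs'. is_cycle V E cs' \<longrightarrow> length cs' \<le> length cs"
        using exists_longest_cycle[OF sg] by blast
      then show ?thesis
        using outerplane_drawing.graph_hom_cycle_graph_longest_cycle_step[OF od girth smaller]
          by blast
    qed
  qed
qed

theorem mainTheorem14:
  fixes V :: "'a set" and E :: "'a \<Rightarrow> 'a \<Rightarrow> bool" and k :: nat
  assumes "k \<ge> 1"
    and "outerplanar V E"
    and "girth_at_least V E (2 * k)"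
  shows "\<exists>f. graph_hom V E {0..<2 * k + 1} (cycle_graph_adj (2 * k + 1)) f"
proof -
  have "\<exists>f. graph_hom V E {0..<2 * k + 1} (cycle_graph_adj (2 * k + 1)) f"
    if "outerplanar V E" "girth_at_least V E (2 * k)" for V :: "'a set" and E
    using that
  proof (induction "card V" arbitrary: V E rule: less_induct)
    case less
    have "finite V" using less.prems(1) unfolding outerplanar_def simple_graph_def by blast
    show ?case
    proof (rule outerplanar_graph_hom_cycle_graph_step[OF less.prems])
      fix W assume W: "W \<subset> V"
      have "outerplanar W (restrict_adj E W)" "girth_at_least W (restrict_adj E W) (2 * k)"
        using outerplanar_restrict_adj[OF less.prems(1)]
          girth_at_least_restrict_adj[OF less.prems(2)] W
        by auto
      then show "\<exists>f. graph_hom W (restrict_adj E W) {0..<2 * k + 1} (cycle_graph_adj (2 * k + 1)) f"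
        using less.hyps[OF psubset_card_mono[OF \<open>finite V\<close> W]] by blast
    qed
  qed
  then show ?thesis using assms(2,3) .
qed

end
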